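(* Let $(X,X^+)$ be an ordered Banach space whose cone $X^+$ is normal and has non-empty interior, and let $T\in\mathcal{L}(X)$ be positive. Then the following assertions are equivalent: (i) $\operatorname{r}(T) < 1$. (ii) (Dual small-gain condition) For each $0 \neq x' \in (X')^+$ we have $T'x' \not\ge x'$. (iii) For every interior point $z$ of $X^+$ there is $\eta>0$ such that $Tx \not\ge x - \eta\|x\| z$ for all $x \in X^+\setminus\{0\}$. (iv) There exist an interior point $z$ of $X^+$ and $\eta>0$ such that $Tx \not\ge x - \eta\|x\| z$ for all $x \in X^+\setminus\{0\}$. (v) There exists an interior point $z$ of $X^+$ such that $Tz \ll z$. (vi) There exist an interior point $z$ of $X^+$ and $\lambda\in(0,1)$ such that $Tz \le \lambda z$. (vii) (Strong stability) $T^k x \to 0$ as $k\to\infty$ for each $x\in X$. (viii) For each $x \in X^+$ we have $\inf_{k\ge 0}\|T^k x\| = 0$.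
   Context: An ordered Banach space $(X,X^+)$ is a real Banach space $X$ with a non-empty closed set $X^+$ such that $\alpha X^+ + \beta X^+\subseteq X^+$ for $\alpha,\beta\ge0$ and $X^+\cap(-X^+)=\{0\}$; $x\le y$ means $y-x\in X^+$, and $x\not\ge y$ means $x-y\notin X^+$. The cone is normal if there is $C>0$ with $\|x\|\le C\|y\|$ whenever $0\le x\le y$. $x\ll y$ means $y-x$ lies in the topological interior of $X^+$. $T$ is positive if $TX^+\subseteq X^+$; $T'$ denotes the dual (adjoint) operator on the dual space $X'$, and $(X')^+=\{x'\in X':x'(x)\ge0 \ \forall x\in X^+\}$ with the induced order. $\operatorname{r}(T)$ is the spectral radius of (the complexification of) $T$. *)

theory Defs
  imports "HOL-Analysis.Analysis"
begin

definition ordered_cone :: "'a::real_normed_vector set \<Rightarrow> bool" where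
  "ordered_cone K \<longleftrightarrow> K \<noteq> {} \<and> closed K \<and>
     (\<forall>\<alpha> \<beta> x y. \<alpha> \<ge> 0 \<longrightarrow> \<beta> \<ge> 0 \<longrightarrow> x \<in> K \<longrightarrow> y \<in> K \<longrightarrow> \<alpha> *\<^sub>R x + \<beta> *\<^sub>R y \<in> K) \<and>
     K \<inter> uminus ` K = {0}"

definition normal_cone :: "'a::real_normed_vector set \<Rightarrow> bool" where
  "normal_cone K \<longleftrightarrow> (\<exists>C>0. \<forall>x y. x \<in> K \<longrightarrow> y - x \<in> K \<longrightarrow> norm x \<le> C * norm y)"

text \<open>Spectrum of the complexification of a real operator T on X: the complexification
  is X \<times> X with (a + i b)(x, y) = (a x - b y, a y + b x) and T_C (x,y) = (T x, T y).
  For a bounded operator on a Banach space, T_C - \<lambda> has a bounded inverse iff it is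
  bijective (open mapping theorem), so the spectrum is the set of \<lambda> where
  T_C - \<lambda> is not bijective.\<close>
definition cspectrum :: "('a::real_normed_vector \<Rightarrow> 'a) \<Rightarrow> complex set" where
  "cspectrum T = {c. \<not> bij (\<lambda>(x, y). (T x - (Re c *\<^sub>R x - Im c *\<^sub>R y),
                                      T y - (Re c *\<^sub>R y + Im c *\<^sub>R x)))}"

definition spectral_radius :: "('a::real_normed_vector \<Rightarrow> 'a) \<Rightarrow> real" where
  "spectral_radius T = (if cspectrum T = {} then 0 else Sup (cmod ` cspectrum T))"

end

(*
  Everything is organised around condition (v), an interior point z of K with z - T z again
  interior.  From (v) one gets T z \<le> l z with l < 1; as z is an order unit and K is normal,
  this bounds the powers of T geometrically, norm (T^k x) \<le> M l^k norm x, which gives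
  r(T) < 1 (a power of c\<inverse> T is a contraction on the complexification for cmod c > l),
  strong stability, and, by iterating x \<le> T x + e z, the uniform small-gain margins (iii).
  Conversely, if r(T) < 1 or if a margin (iv) exists, the resolvent (m - T)\<inverse> is positive for
  every m \<ge> 1: positivity holds for large m and is continued downwards, normality keeping
  the resolvents bounded; then (1 - T)\<inverse> applied to an interior point satisfies (v).
  Finally, inf norm (T^k x) = 0 forces every positive f with T'f \<ge> f to vanish, and if (v)
  fails then the convex cone of all b - T b - k (b, k \<in> K) misses the interior of K, so a
  Hahn--Banach separation yields such an f \<noteq> 0.
*)
theory Submission
  imports Defs
begin

section \<open>Cones with nonempty interior\<close>

lemma interior_perturb:
  fixes w v :: "'a::real_normed_vector"
  assumes "w \<in> interior S"
  obtains \<epsilon> where "\<epsilon> > 0" "\<And>t. \<bar>t\<bar> \<le> \<epsilon> \<Longrightarrow> w + t *\<^sub>R v \<in> interior S"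
proof -
  obtain e where e: "e > 0" "ball w e \<subseteq> interior S"
    using assms open_interior open_contains_ball by blast
  define \<epsilon> where "\<epsilon> = e / (2 * (norm v + 1))"
  have "\<epsilon> > 0" using e by (simp add: \<epsilon>_def add_nonneg_pos)
  moreover have "w + t *\<^sub>R v \<in> interior S" if t: "\<bar>t\<bar> \<le> \<epsilon>" for t
  proof -
    have "\<bar>t\<bar> * norm v \<le> \<epsilon> * (norm v + 1)" using t by (intro mult_mono) auto
    also have "\<dots> = e / 2"
      using norm_ge_zero[of v] unfolding \<epsilon>_def by (simp add: divide_simps add_nonneg_eq_0_iff)
    also have "\<dots> < e" using e by simp
    finally show ?thesis using e(2) by (auto simp: dist_norm)
  qed
  ultimately show ?thesis using that by blast
qed

locale pos_cone =
  fixes K :: "'a::real_normed_vector set"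
  assumes ordered_cone: "ordered_cone K"
begin

lemma cone_add: "x \<in> K \<Longrightarrow> y \<in> K \<Longrightarrow> x + y \<in> K"
  using ordered_cone unfolding ordered_cone_def by (metis scaleR_one order_refl zero_le_one)

lemma cone_zero: "0 \<in> K"
proof -
  obtain x where "x \<in> K" using ordered_cone unfolding ordered_cone_def by auto
  then have "0 *\<^sub>R x + 0 *\<^sub>R x \<in> K" using ordered_cone unfolding ordered_cone_def by blast
  then show ?thesis by simp
qed

lemma cone_scaleR: "x \<in> K \<Longrightarrow> 0 \<le> t \<Longrightarrow> t *\<^sub>R x \<in> K"
  using ordered_cone cone_zero unfolding ordered_cone_def
  by (metis add.right_neutral scaleR_zero_right order_refl)

lemma closed_cone: "closed K"
  using ordered_cone unfolding ordered_cone_def by auto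

lemma interior_cone_add: "u \<in> interior K \<Longrightarrow> k \<in> K \<Longrightarrow> u + k \<in> interior K"
proof -
  assume u: "u \<in> interior K" and k: "k \<in> K"
  obtain e where e: "e > 0" "ball u e \<subseteq> K" using u mem_interior by blast
  have "ball (u + k) e \<subseteq> K"
  proof
    fix w assume "w \<in> ball (u + k) e"
    then have "w - k \<in> ball u e" by (simp add: dist_norm algebra_simps)
    then have "w - k \<in> K" using e by auto
    from cone_add[OF this k] show "w \<in> K" by simp
  qed
  then show ?thesis using e mem_interior by blast
qed

lemma interior_cone_scaleR: "u \<in> interior K \<Longrightarrow> t > 0 \<Longrightarrow> t *\<^sub>R u \<in> interior K"
proof -
  assume u: "u \<in> interior K" and t: "t > 0"
  have "open ((*\<^sub>R) t ` interior K)"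
    using t by (simp add: open_scaling)
  moreover have "(*\<^sub>R) t ` interior K \<subseteq> K"
    using t interior_subset cone_scaleR by fastforce
  ultimately have "(*\<^sub>R) t ` interior K \<subseteq> interior K"
    by (rule interior_maximal[rotated])
  then show ?thesis using u by blast
qed

lemma interior_order_unit:
  assumes "z \<in> interior K"
  shows "\<exists>d>0. \<forall>x. (norm x / d) *\<^sub>R z - x \<in> K \<and> (norm x / d) *\<^sub>R z + x \<in> K"
proof -
  obtain e where e: "e > 0" "ball z e \<subseteq> K" using assms mem_interior by blast
  define d where "d = e / 2"
  have d: "d > 0" "d < e" using e by (auto simp: d_def)
  have "(norm x / d) *\<^sub>R z - x \<in> K \<and> (norm x / d) *\<^sub>R z + x \<in> K" for x
  proof (cases "x = 0")
    case True then show ?thesis by (simp add: cone_zero)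
  next
    case False
    define u where "u = (d / norm x) *\<^sub>R x"
    have "norm u = d" using False d by (simp add: u_def)
    then have "z - u \<in> K" "z + u \<in> K" using e(2) d by (auto simp: dist_norm subset_iff)
    then have "(norm x / d) *\<^sub>R (z - u) \<in> K" "(norm x / d) *\<^sub>R (z + u) \<in> K"
      using d by (auto intro!: cone_scaleR)
    moreover have "(norm x / d) *\<^sub>R u = x" using False d by (simp add: u_def)
    ultimately show ?thesis by (simp add: algebra_simps)
  qed
  with d show ?thesis by blast
qed

lemma interior_cone_dominates:
  assumes z: "z \<in> interior K"
  shows "\<exists>\<gamma>>0. \<gamma> *\<^sub>R z - x \<in> K"
proof -
  obtain d where d: "d > 0" "\<And>x. (norm x / d) *\<^sub>R z - x \<in> K"
    using interior_order_unit[OF z] by blast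
  have "z \<in> K" using z interior_subset by blast
  have "(norm x / d + 1) *\<^sub>R z - x = ((norm x / d) *\<^sub>R z - x) + z" by (simp add: scaleR_add_left)
  then have "(norm x / d + 1) *\<^sub>R z - x \<in> K" using cone_add[OF d(2) \<open>z \<in> K\<close>] by (simp only:)
  moreover have "norm x / d + 1 > 0" using d(1) by (intro add_nonneg_pos) simp_all
  ultimately show ?thesis by blast
qed

lemma linear_eq_zero_on_solid_cone:
  assumes f: "linear f" and solid: "interior K \<noteq> {}" and zero: "\<And>x. x \<in> K \<Longrightarrow> f x = 0"
  shows "f = (\<lambda>_. 0)"
proof
  fix x :: 'a
  obtain z where z: "z \<in> interior K" using solid by blast
  then obtain \<gamma> where \<gamma>: "\<gamma> > 0" "\<gamma> *\<^sub>R z - x \<in> K" using interior_cone_dominates by blast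
  have "\<gamma> *\<^sub>R z \<in> K" using z interior_subset \<gamma>(1) by (blast intro: cone_scaleR less_imp_le)
  then have "f (\<gamma> *\<^sub>R z) - f (\<gamma> *\<^sub>R z - x) = 0" using zero \<gamma>(2) by simp
  then show "f x = 0" using f by (simp add: linear_diff)
qed

end

locale normal_pos_cone = pos_cone K for K :: "'a::real_normed_vector set" +
  assumes normal: "normal_cone K"
begin

definition normal_const :: real where
  "normal_const = (SOME C. C > 0 \<and> (\<forall>x y. x \<in> K \<longrightarrow> y - x \<in> K \<longrightarrow> norm x \<le> C * norm y))"

lemma normal_const_pos: "normal_const > 0"
  and norm_le_normal_const: "x \<in> K \<Longrightarrow> y - x \<in> K \<Longrightarrow> norm x \<le> normal_const * norm y"
proof -
  have "\<exists>C. C > 0 \<and> (\<forall>x y. x \<in> K \<longrightarrow> y - x \<in> K \<longrightarrow> norm x \<le> C * norm y)"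
    using normal unfolding normal_cone_def by auto
  from someI_ex[OF this] show "normal_const > 0"
    and "x \<in> K \<Longrightarrow> y - x \<in> K \<Longrightarrow> norm x \<le> normal_const * norm y"
    unfolding normal_const_def by auto
qed

lemma norm_le_of_order_interval:
  assumes "a - x \<in> K" "a + x \<in> K"
  shows "norm x \<le> (2 * normal_const + 1) * norm a"
proof -
  have "2 *\<^sub>R a - (a + x) \<in> K" using assms(1) by (simp add: scaleR_2 algebra_simps)
  then have "norm (a + x) \<le> normal_const * norm (2 *\<^sub>R a)"
    using assms(2) by (rule norm_le_normal_const[rotated])
  then have "norm (a + x) \<le> 2 * normal_const * norm a" by simp
  moreover have "norm x \<le> norm (a + x) + norm a"
    by (metis add_diff_cancel_left' norm_triangle_ineq4)
  ultimately show ?thesis by (simp add: algebra_simps)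
qed

end

section \<open>Hahn--Banach and separation from the interior of a cone\<close>

text \<open>Partial linear functionals are represented by their graphs, so that Zorn's lemma can be
  applied to set inclusion.\<close>
definition dominated_linear_graph :: "('a::real_vector \<Rightarrow> real) \<Rightarrow> 'a \<Rightarrow> ('a \<times> real) set \<Rightarrow> bool" where
  "dominated_linear_graph p d0 G \<longleftrightarrow> (\<forall>x a b. (x, a) \<in> G \<longrightarrow> (x, b) \<in> G \<longrightarrow> a = b)
     \<and> (\<forall>x a y b. (x, a) \<in> G \<longrightarrow> (y, b) \<in> G \<longrightarrow> (x + y, a + b) \<in> G)
     \<and> (\<forall>x a c. (x, a) \<in> G \<longrightarrow> (c *\<^sub>R x, c * a) \<in> G)
     \<and> (\<forall>x a. (x, a) \<in> G \<longrightarrow> a \<le> p x) \<and> (d0, 1) \<in> G"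

lemma dominated_linear_graphD:
  assumes "dominated_linear_graph p d0 G"
  shows dominated_linear_graph_unique: "(x, a) \<in> G \<Longrightarrow> (x, b) \<in> G \<Longrightarrow> a = b"
    and dominated_linear_graph_add: "(x, a) \<in> G \<Longrightarrow> (y, b) \<in> G \<Longrightarrow> (x + y, a + b) \<in> G"
    and dominated_linear_graph_scaleR: "(x, a) \<in> G \<Longrightarrow> (c *\<^sub>R x, c * a) \<in> G"
    and dominated_linear_graph_le: "(x, a) \<in> G \<Longrightarrow> a \<le> p x"
    and dominated_linear_graph_base: "(d0, 1) \<in> G"
  using assms unfolding dominated_linear_graph_def by blast+

lemma dominated_linear_graph_Union:
  assumes C: "C \<in> chains {G. dominated_linear_graph p d0 G}" "C \<noteq> {}"
  shows "dominated_linear_graph p d0 (\<Union>C)"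
proof -
  have CA: "\<And>G. G \<in> C \<Longrightarrow> dominated_linear_graph p d0 G"
    using C unfolding chains_def by auto
  have both: "\<exists>G\<in>C. u \<in> G \<and> v \<in> G" if uv: "u \<in> \<Union>C" "v \<in> \<Union>C" for u v
  proof -
    obtain X Y where "X \<in> C" "Y \<in> C" "u \<in> X" "v \<in> Y" using uv by auto
    then show ?thesis using C(1) unfolding chains_def chain_subset_def by blast
  qed
  show ?thesis unfolding dominated_linear_graph_def
  proof (intro conjI allI impI)
    fix x a b assume "(x, a) \<in> \<Union>C" "(x, b) \<in> \<Union>C"
    then obtain G where "G \<in> C" "(x, a) \<in> G" "(x, b) \<in> G" using both by blast
    then show "a = b" using CA dominated_linear_graph_unique by metis
  next
    fix x a y b assume "(x, a) \<in> \<Union>C" "(y, b) \<in> \<Union>C"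
    then obtain G where "G \<in> C" "(x, a) \<in> G" "(y, b) \<in> G" using both by blast
    then show "(x + y, a + b) \<in> \<Union>C" using CA dominated_linear_graph_add by blast
  next
    fix x a c assume "(x, a) \<in> \<Union>C"
    then show "(c *\<^sub>R x, c * a) \<in> \<Union>C" using CA dominated_linear_graph_scaleR by blast
  next
    fix x a assume "(x, a) \<in> \<Union>C"
    then show "a \<le> p x" using CA dominated_linear_graph_le by blast
  next
    show "(d0, 1) \<in> \<Union>C" using C(2) CA dominated_linear_graph_base by blast
  qed
qed

lemma dominated_linear_graph_line:
  assumes "d0 \<noteq> 0" and line: "\<And>t. t \<le> p (t *\<^sub>R d0)"
  shows "dominated_linear_graph p d0 (range (\<lambda>t. (t *\<^sub>R d0, t)))"
  unfolding dominated_linear_graph_def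
proof (intro conjI allI impI)
  fix x a b assume "(x, a) \<in> range (\<lambda>t. (t *\<^sub>R d0, t))" "(x, b) \<in> range (\<lambda>t. (t *\<^sub>R d0, t))"
  then show "a = b" using \<open>d0 \<noteq> 0\<close> by auto
next
  fix x a y b assume "(x, a) \<in> range (\<lambda>t. (t *\<^sub>R d0, t))" "(y, b) \<in> range (\<lambda>t. (t *\<^sub>R d0, t))"
  then show "(x + y, a + b) \<in> range (\<lambda>t. (t *\<^sub>R d0, t))" by (auto simp: scaleR_add_left[symmetric])
next
  fix x a c assume "(x, a) \<in> range (\<lambda>t. (t *\<^sub>R d0, t))"
  then show "(c *\<^sub>R x, c * a) \<in> range (\<lambda>t. (t *\<^sub>R d0, t))" by auto
next
  fix x a assume "(x, a) \<in> range (\<lambda>t. (t *\<^sub>R d0, t))"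
  then show "a \<le> p x" using line by auto
next
  show "(d0, 1) \<in> range (\<lambda>t. (t *\<^sub>R d0, t))" by (auto intro: image_eqI[of _ _ 1])
qed

text \<open>The one-step extension of Hahn--Banach: c is the value to be assigned to x1.\<close>
lemma dominated_extension_value:
  assumes G: "dominated_linear_graph p d0 G" and sub: "\<And>x y. p (x + y) \<le> p x + p y"
  obtains c where "\<And>y a. (y, a) \<in> G \<Longrightarrow> a - p (y - x1) \<le> c"
    and "\<And>w b. (w, b) \<in> G \<Longrightarrow> c \<le> p (w + x1) - b"
proof -
  have key: "a - p (y - x1) \<le> p (w + x1) - b" if "(y, a) \<in> G" "(w, b) \<in> G" for y a w b
  proof -
    have "a + b \<le> p (y + w)"
      using G that by (blast intro: dominated_linear_graph_le dominated_linear_graph_add)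
    also have "\<dots> \<le> p (y - x1) + p (w + x1)" using sub[of "y - x1" "w + x1"] by simp
    finally show ?thesis by simp
  qed
  define S where "S = {a - p (y - x1) | y a. (y, a) \<in> G}"
  have d0: "(d0, 1) \<in> G" using G by (rule dominated_linear_graph_base)
  then have "S \<noteq> {}" unfolding S_def by blast
  have "bdd_above S"
    using key[OF _ d0] unfolding S_def bdd_above_def by fastforce
  show ?thesis
  proof
    show "a - p (y - x1) \<le> Sup S" if "(y, a) \<in> G" for y a
      using \<open>bdd_above S\<close> that by (intro cSup_upper) (auto simp: S_def)
    show "Sup S \<le> p (w + x1) - b" if "(w, b) \<in> G" for w b
      using \<open>S \<noteq> {}\<close> key[OF _ that] by (intro cSup_least) (auto simp: S_def)
  qed
qed

lemma dominated_extension_le: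
  assumes G: "dominated_linear_graph p d0 G" and hom: "\<And>x t. t > 0 \<Longrightarrow> p (t *\<^sub>R x) = t * p x"
    and c_lower: "\<And>y a. (y, a) \<in> G \<Longrightarrow> a - p (y - x1) \<le> c"
    and c_upper: "\<And>w b. (w, b) \<in> G \<Longrightarrow> c \<le> p (w + x1) - b"
    and ya: "(y, a) \<in> G"
  shows "a + t * c \<le> p (y + t *\<^sub>R x1)"
proof (cases t "0::real" rule: linorder_cases)
  case equal then show ?thesis using dominated_linear_graph_le[OF G ya] by simp
next
  case greater
  have "((1/t) *\<^sub>R y, (1/t) * a) \<in> G" using G ya by (rule dominated_linear_graph_scaleR)
  from c_upper[OF this] have "t * (c + (1/t) * a) \<le> t * p ((1/t) *\<^sub>R y + x1)"
    using greater by (intro mult_left_mono) auto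
  also have "\<dots> = p (y + t *\<^sub>R x1)"
    using hom[OF greater, of "(1/t) *\<^sub>R y + x1"] greater by (simp add: algebra_simps)
  finally show ?thesis using greater by (simp add: algebra_simps)
next
  case less
  define s where "s = - t"
  have s: "s > 0" using less by (simp add: s_def)
  have "((1/s) *\<^sub>R y, (1/s) * a) \<in> G" using G ya by (rule dominated_linear_graph_scaleR)
  from c_lower[OF this] have "s * ((1/s) * a - p ((1/s) *\<^sub>R y - x1)) \<le> s * c"
    using s by (intro mult_left_mono) auto
  moreover have "s * p ((1/s) *\<^sub>R y - x1) = p (y + t *\<^sub>R x1)"
    using hom[OF s, of "(1/s) *\<^sub>R y - x1"] s by (simp add: algebra_simps s_def)
  ultimately show ?thesis using s by (simp add: algebra_simps s_def)
qed

lemma dominated_linear_graph_direction_unique: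
  assumes G: "dominated_linear_graph p d0 G" and new: "\<nexists>a. (x1, a) \<in> G"
    and "(y1, a1) \<in> G" "(y2, a2) \<in> G" and eq: "y1 + t1 *\<^sub>R x1 = y2 + t2 *\<^sub>R x1"
  shows "t1 = t2"
proof (rule ccontr)
  assume ne: "t1 \<noteq> t2"
  have "(y2 + (-1) *\<^sub>R y1, a2 + (-1) * a1) \<in> G"
    using assms by (blast intro: dominated_linear_graph_add dominated_linear_graph_scaleR)
  then have "((1 / (t1 - t2)) *\<^sub>R (y2 - y1), (1 / (t1 - t2)) * (a2 - a1)) \<in> G"
    using dominated_linear_graph_scaleR[OF G] by fastforce
  moreover have "y2 - y1 = (t1 - t2) *\<^sub>R x1" using eq by (simp add: algebra_simps)
  ultimately show False using new ne by auto
qed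

definition graph_extension :: "('a::real_vector \<times> real) set \<Rightarrow> 'a \<Rightarrow> real \<Rightarrow> ('a \<times> real) set" where
  "graph_extension G x1 c = {(y + t *\<^sub>R x1, a + t * c) | y a t. (y, a) \<in> G}"

lemma dominated_linear_graph_extension:
  assumes G: "dominated_linear_graph p d0 G" and hom: "\<And>x t. t > 0 \<Longrightarrow> p (t *\<^sub>R x) = t * p x"
    and new: "\<nexists>a. (x1, a) \<in> G"
    and c_lower: "\<And>y a. (y, a) \<in> G \<Longrightarrow> a - p (y - x1) \<le> c"
    and c_upper: "\<And>w b. (w, b) \<in> G \<Longrightarrow> c \<le> p (w + x1) - b"
  shows "dominated_linear_graph p d0 (graph_extension G x1 c)"
  unfolding dominated_linear_graph_def
proof (intro conjI allI impI)
  fix x a b assume "(x, a) \<in> graph_extension G x1 c" "(x, b) \<in> graph_extension G x1 c"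
  then obtain y1 a1 t1 y2 a2 t2 where e: "(y1, a1) \<in> G" "(y2, a2) \<in> G"
    "x = y1 + t1 *\<^sub>R x1" "a = a1 + t1 * c" "x = y2 + t2 *\<^sub>R x1" "b = a2 + t2 * c"
    unfolding graph_extension_def by blast
  have "t1 = t2"
    using dominated_linear_graph_direction_unique[OF G new e(1,2)] e(3,5) by simp
  then show "a = b" using e dominated_linear_graph_unique[OF G] by auto
next
  fix x a y b assume "(x, a) \<in> graph_extension G x1 c" "(y, b) \<in> graph_extension G x1 c"
  then obtain y1 a1 t1 y2 a2 t2 where e: "(y1, a1) \<in> G" "(y2, a2) \<in> G"
    "x = y1 + t1 *\<^sub>R x1" "a = a1 + t1 * c" "y = y2 + t2 *\<^sub>R x1" "b = a2 + t2 * c"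
    unfolding graph_extension_def by blast
  have "(x + y, a + b) = ((y1 + y2) + (t1 + t2) *\<^sub>R x1, (a1 + a2) + (t1 + t2) * c)"
    using e by (simp add: algebra_simps)
  then show "(x + y, a + b) \<in> graph_extension G x1 c"
    unfolding graph_extension_def using dominated_linear_graph_add[OF G e(1,2)] by blast
next
  fix x a s assume "(x, a) \<in> graph_extension G x1 c"
  then obtain y1 a1 t1 where e: "(y1, a1) \<in> G" "x = y1 + t1 *\<^sub>R x1" "a = a1 + t1 * c"
    unfolding graph_extension_def by blast
  have "(s *\<^sub>R x, s * a) = (s *\<^sub>R y1 + (s * t1) *\<^sub>R x1, s * a1 + (s * t1) * c)"
    using e by (simp add: algebra_simps)
  then show "(s *\<^sub>R x, s * a) \<in> graph_extension G x1 c"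
    unfolding graph_extension_def using dominated_linear_graph_scaleR[OF G e(1)] by blast
next
  fix x a assume "(x, a) \<in> graph_extension G x1 c"
  then show "a \<le> p x"
    unfolding graph_extension_def using dominated_extension_le[OF G hom c_lower c_upper] by blast
next
  show "(d0, 1) \<in> graph_extension G x1 c"
    unfolding graph_extension_def using dominated_linear_graph_base[OF G] by force
qed

lemma dominated_linear_graph_extend:
  assumes G: "dominated_linear_graph p d0 G"
    and sub: "\<And>x y. p (x + y) \<le> p x + p y" and hom: "\<And>x t. t > 0 \<Longrightarrow> p (t *\<^sub>R x) = t * p x"
    and new: "\<nexists>a. (x1, a) \<in> G"
  obtains G' c where "dominated_linear_graph p d0 G'" "G \<subseteq> G'" "(x1, c) \<in> G'"
proof -
  obtain c where "\<And>y a. (y, a) \<in> G \<Longrightarrow> a - p (y - x1) \<le> c"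
    and "\<And>w b. (w, b) \<in> G \<Longrightarrow> c \<le> p (w + x1) - b"
    using dominated_extension_value[OF G sub] by blast
  then have "dominated_linear_graph p d0 (graph_extension G x1 c)"
    using dominated_linear_graph_extension[OF G hom new] by blast
  moreover have "G \<subseteq> graph_extension G x1 c" unfolding graph_extension_def by force
  moreover have "(0, 0) \<in> G"
    using dominated_linear_graph_scaleR[OF G dominated_linear_graph_base[OF G], of 0] by simp
  then have "(x1, c) \<in> graph_extension G x1 c" unfolding graph_extension_def by force
  ultimately show ?thesis by (rule that)
qed

lemma total_dominated_linear_graph:
  fixes p :: "'a::real_vector \<Rightarrow> real"
  assumes sub: "\<And>x y. p (x + y) \<le> p x + p y"
    and hom: "\<And>x t. t > 0 \<Longrightarrow> p (t *\<^sub>R x) = t * p x"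
    and line: "\<And>t. t \<le> p (t *\<^sub>R d0)"
  shows "\<exists>M. dominated_linear_graph p d0 M \<and> (\<forall>x. \<exists>a. (x, a) \<in> M)"
proof -
  define A where "A = {G. dominated_linear_graph p d0 G}"
  have "p 0 = 0" using hom[of 2 0] by simp
  then have "d0 \<noteq> 0" using line[of 1] by auto
  then have line_graph: "range (\<lambda>t. (t *\<^sub>R d0, t)) \<in> A"
    unfolding A_def using dominated_linear_graph_line line by blast
  have "\<forall>C\<in>chains A. \<exists>U\<in>A. \<forall>X\<in>C. X \<subseteq> U"
  proof
    fix C assume C: "C \<in> chains A"
    show "\<exists>U\<in>A. \<forall>X\<in>C. X \<subseteq> U"
    proof (cases "C = {}")
      case True then show ?thesis using line_graph by blast
    next
      case False
      then have "\<Union>C \<in> A" using C dominated_linear_graph_Union unfolding A_def by blast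
      then show ?thesis by blast
    qed
  qed
  from Zorn_Lemma2[OF this] obtain M where MA: "M \<in> A" and maxM: "\<And>X. X \<in> A \<Longrightarrow> M \<subseteq> X \<Longrightarrow> X = M"
    by blast
  have M: "dominated_linear_graph p d0 M" using MA by (simp add: A_def)
  have "\<exists>a. (x, a) \<in> M" for x
  proof (rule ccontr)
    assume new: "\<nexists>a. (x, a) \<in> M"
    obtain G c where G: "dominated_linear_graph p d0 G" "M \<subseteq> G" "(x, c) \<in> G"
      by (rule dominated_linear_graph_extend[OF M sub hom new])
    then have "G = M" by (intro maxM) (simp_all add: A_def)
    with G(3) new show False by blast
  qed
  with M show ?thesis by blast
qed

text \<open>The hypothesis line says that t d0 \<mapsto> t is dominated by p on the line through d0.\<close>
lemma hahn_banach_line: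
  fixes p :: "'a::real_vector \<Rightarrow> real"
  assumes sub: "\<And>x y. p (x + y) \<le> p x + p y"
    and hom: "\<And>x t. t > 0 \<Longrightarrow> p (t *\<^sub>R x) = t * p x"
    and line: "\<And>t. t \<le> p (t *\<^sub>R d0)"
  obtains f where "linear f" "\<And>x. f x \<le> p x" "f d0 = 1"
proof -
  obtain M where M: "dominated_linear_graph p d0 M" and total: "\<And>x. \<exists>a. (x, a) \<in> M"
    using total_dominated_linear_graph[OF sub hom line] by blast
  define f where "f x = (THE a. (x, a) \<in> M)" for x
  have fM: "(x, f x) \<in> M" for x
    unfolding f_def using total[of x] dominated_linear_graph_unique[OF M] by (metis theI)
  have f_eq: "f x = a" if "(x, a) \<in> M" for x a
    using dominated_linear_graph_unique[OF M fM that] .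
  show ?thesis
  proof
    show "linear f"
    proof (rule linearI)
      show "f (x + y) = f x + f y" for x y
        using f_eq[OF dominated_linear_graph_add[OF M fM fM]] .
      show "f (c *\<^sub>R x) = c *\<^sub>R f x" for c x
        using f_eq[OF dominated_linear_graph_scaleR[OF M fM]] by simp
    qed
    show "f x \<le> p x" for x using dominated_linear_graph_le[OF M fM] .
    show "f d0 = 1" using f_eq[OF dominated_linear_graph_base[OF M]] .
  qed
qed

locale cone_separation = pos_cone K for K :: "'a::real_normed_vector set" +
  fixes W :: "'a set" and z :: 'a
  assumes W_add: "u \<in> W \<Longrightarrow> v \<in> W \<Longrightarrow> u + v \<in> W"
    and W_scaleR: "u \<in> W \<Longrightarrow> 0 \<le> t \<Longrightarrow> t *\<^sub>R u \<in> W"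
    and uminus_cone_subset: "k \<in> K \<Longrightarrow> - k \<in> W"
    and W_disjoint: "W \<inter> interior K = {}"
    and z_interior: "z \<in> interior K"
begin

text \<open>The Minkowski-type functional of W in direction z; every linear functional below it
  separates W from z.\<close>
definition gauge :: "'a \<Rightarrow> real" where
  "gauge x = Inf {s. x - s *\<^sub>R z \<in> W}"

lemma gauge_set_bounds:
  "\<exists>d>0. (\<forall>x. x - (norm x / d) *\<^sub>R z \<in> W) \<and> (\<forall>x s. x - s *\<^sub>R z \<in> W \<longrightarrow> - (norm x / d) \<le> s)"
proof -
  obtain d where d: "d > 0" "\<And>x. (norm x / d) *\<^sub>R z - x \<in> K" "\<And>x. (norm x / d) *\<^sub>R z + x \<in> K"
    using interior_order_unit[OF z_interior] by blast
  have "x - (norm x / d) *\<^sub>R z \<in> W" for x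
    using uminus_cone_subset[OF d(2)[of x]] by simp
  moreover have "- (norm x / d) \<le> s" if xs: "x - s *\<^sub>R z \<in> W" for x s
  proof (rule ccontr)
    assume "\<not> - (norm x / d) \<le> s"
    then have "- s - norm x / d > 0" by simp
    from interior_cone_scaleR[OF z_interior this]
    have "(- s - norm x / d) *\<^sub>R z + ((norm x / d) *\<^sub>R z + x) \<in> interior K"
      using d(3) by (rule interior_cone_add)
    also have "(- s - norm x / d) *\<^sub>R z + ((norm x / d) *\<^sub>R z + x) = x - s *\<^sub>R z"
      by (simp add: algebra_simps)
    finally show False using xs W_disjoint by blast
  qed
  ultimately show ?thesis using d(1) by blast
qed

lemma gauge_le:
  assumes "x - s *\<^sub>R z \<in> W"
  shows "gauge x \<le> s"
proof -
  obtain d where "\<forall>s. x - s *\<^sub>R z \<in> W \<longrightarrow> - (norm x / d) \<le> s"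
    using gauge_set_bounds by blast
  then have "bdd_below {s. x - s *\<^sub>R z \<in> W}" by (auto simp: bdd_below_def)
  then show ?thesis unfolding gauge_def using assms by (intro cInf_lower) simp_all
qed

lemma le_gauge:
  assumes "\<And>s. x - s *\<^sub>R z \<in> W \<Longrightarrow> c \<le> s"
  shows "c \<le> gauge x"
proof -
  obtain d where "x - (norm x / d) *\<^sub>R z \<in> W"
    using gauge_set_bounds by blast
  then have "{s. x - s *\<^sub>R z \<in> W} \<noteq> {}" by blast
  then show ?thesis unfolding gauge_def by (rule cInf_greatest) (simp add: assms)
qed

lemma gauge_add: "gauge (x + y) \<le> gauge x + gauge y"
proof -
  have sum: "gauge (x + y) \<le> s + t" if "x - s *\<^sub>R z \<in> W" "y - t *\<^sub>R z \<in> W" for s t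
  proof (rule gauge_le)
    show "x + y - (s + t) *\<^sub>R z \<in> W"
      using W_add[OF that] by (simp add: algebra_simps)
  qed
  have "gauge (x + y) - t \<le> gauge x" if t: "y - t *\<^sub>R z \<in> W" for t
  proof (rule le_gauge)
    fix s assume "x - s *\<^sub>R z \<in> W"
    from sum[OF this t] show "gauge (x + y) - t \<le> s" by simp
  qed
  then have "gauge (x + y) - gauge x \<le> gauge y"
    by (intro le_gauge) (simp add: algebra_simps)
  then show ?thesis by simp
qed

lemma gauge_scaleR:
  assumes t: "t > 0"
  shows "gauge (t *\<^sub>R x) = t * gauge x"
proof (rule antisym)
  have "gauge (t *\<^sub>R x) / t \<le> s" if s: "x - s *\<^sub>R z \<in> W" for s
  proof -
    have "t *\<^sub>R x - (t * s) *\<^sub>R z \<in> W" using W_scaleR[OF s, of t] t by (simp add: algebra_simps)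
    then have "gauge (t *\<^sub>R x) \<le> t * s" by (rule gauge_le)
    then show ?thesis using t by (simp add: divide_simps mult.commute)
  qed
  then have "gauge (t *\<^sub>R x) / t \<le> gauge x" by (rule le_gauge)
  then show "gauge (t *\<^sub>R x) \<le> t * gauge x" using t by (simp add: divide_simps mult.commute)
next
  have "t * gauge x \<le> s" if s: "t *\<^sub>R x - s *\<^sub>R z \<in> W" for s
  proof -
    have "x - (s / t) *\<^sub>R z \<in> W" using W_scaleR[OF s, of "1/t"] t by (simp add: algebra_simps)
    then have "gauge x \<le> s / t" by (rule gauge_le)
    then show ?thesis using t by (simp add: divide_simps mult.commute)
  qed
  then show "t * gauge x \<le> gauge (t *\<^sub>R x)" by (rule le_gauge)
qed

lemma le_gauge_line: "t \<le> gauge (t *\<^sub>R z)"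
proof (rule le_gauge)
  fix s assume s: "t *\<^sub>R z - s *\<^sub>R z \<in> W"
  show "t \<le> s"
  proof (rule ccontr)
    assume "\<not> t \<le> s"
    then have "(t - s) *\<^sub>R z \<in> interior K" by (intro interior_cone_scaleR[OF z_interior]) simp
    moreover have "(t - s) *\<^sub>R z \<in> W" using s by (simp add: algebra_simps)
    ultimately show False using W_disjoint by blast
  qed
qed

theorem separating_functional:
  obtains f :: "'a \<Rightarrow> real" where "bounded_linear f" "f z = 1" "\<And>w. w \<in> W \<Longrightarrow> f w \<le> 0"
proof -
  obtain f where f: "linear f" "\<And>x. f x \<le> gauge x" "f z = 1"
    using hahn_banach_line[of gauge z] gauge_add gauge_scaleR le_gauge_line by blast
  obtain d where d: "d > 0" "\<And>x. x - (norm x / d) *\<^sub>R z \<in> W"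
    using gauge_set_bounds by blast
  have f_bound: "\<bar>f x\<bar> \<le> norm x / d" for x
  proof -
    have "f x \<le> norm x / d" "f (- x) \<le> norm x / d"
      using f(2)[of x] f(2)[of "- x"] gauge_le[OF d(2)[of x]] gauge_le[OF d(2)[of "- x"]] by auto
    then show ?thesis using linear_neg[OF f(1)] by simp
  qed
  show ?thesis
  proof (rule that)
    show "bounded_linear f"
      using f(1) f_bound
      by (intro bounded_linear_intro[of f "1 / d"]) (auto simp: linear_add linear_scale)
    show "f z = 1" by (rule f(3))
    show "f w \<le> 0" if "w \<in> W" for w
      using f(2)[of w] gauge_le[of w 0] that by simp
  qed
qed

end

section \<open>The spectrum of the complexification\<close>

lemma power_contraction_fixpoint_unique:
  fixes G :: "'b::real_normed_vector \<Rightarrow> 'b"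
  assumes "linear G" and contr: "\<And>w. norm ((G ^^ k) w) \<le> 1/2 * norm w"
    and "G w + p = w" "G w' + p = w'"
  shows "w = w'"
proof -
  have "G (w - w') = w - w'" using assms by (metis add_diff_cancel_right linear_diff)
  then have "(G ^^ k) (w - w') = w - w'" by (induction k) simp_all
  then have "norm (w - w') \<le> 1/2 * norm (w - w')" using contr by metis
  then show ?thesis by simp
qed

lemma power_contraction_fixpoint_exists:
  fixes G :: "'b::banach \<Rightarrow> 'b"
  assumes lin: "linear G" and contr: "\<And>w. norm ((G ^^ k) w) \<le> 1/2 * norm w"
    and S: "closed S" "S \<noteq> {}" "\<And>w. w \<in> S \<Longrightarrow> G w + p \<in> S"
  shows "\<exists>w\<in>S. G w + p = w"
proof -
  define \<Phi> where "\<Phi> w = G w + p" for w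
  have \<Phi>_diff: "(\<Phi> ^^ n) u - (\<Phi> ^^ n) v = (G ^^ n) (u - v)" for n u v
    by (induction n) (simp_all add: \<Phi>_def flip: linear_diff[OF lin])
  have "\<exists>!w\<in>S. (\<Phi> ^^ k) w = w"
  proof (rule Banach_fix[of S "1/2"])
    show "complete S" using S(1) complete_eq_closed by blast
    show "(\<Phi> ^^ k) ` S \<subseteq> S"
    proof -
      have "(\<Phi> ^^ n) w \<in> S" if "w \<in> S" for n w
        using that by (induction n) (auto simp: \<Phi>_def S(3))
      then show ?thesis by blast
    qed
    show "dist ((\<Phi> ^^ k) x) ((\<Phi> ^^ k) y) \<le> 1/2 * dist x y" for x y
      unfolding dist_norm \<Phi>_diff using contr by simp
  qed (use S in auto)
  then obtain w where w: "w \<in> S" "(\<Phi> ^^ k) w = w" by blast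
  have "(\<Phi> ^^ k) (\<Phi> w) = \<Phi> w" using w(2) by (metis comp_apply funpow_swap1)
  then have "(G ^^ k) (\<Phi> w - w) = \<Phi> w - w" using \<Phi>_diff[of k "\<Phi> w" w] w(2) by simp
  then have "norm (\<Phi> w - w) \<le> 1/2 * norm (\<Phi> w - w)" using contr by metis
  then show ?thesis using w(1) by (auto simp: \<Phi>_def)
qed

lemma power_contraction_affine_ex1_fixpoint:
  fixes G :: "'b::banach \<Rightarrow> 'b"
  assumes "linear G" and "\<And>w. norm ((G ^^ k) w) \<le> 1/2 * norm w"
  shows "\<exists>!w. G w + p = w"
  using power_contraction_fixpoint_exists[OF assms, of UNIV p]
    power_contraction_fixpoint_unique[OF assms] by auto

text \<open>The complexification of X is X \<times> X; complex_scaleR is its complex scalar multiplication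
  and complexify T is the complexified operator, matching the definition of cspectrum.\<close>
definition complex_scaleR :: "complex \<Rightarrow> 'a::real_vector \<times> 'a \<Rightarrow> 'a \<times> 'a" where
  "complex_scaleR d w = (Re d *\<^sub>R fst w - Im d *\<^sub>R snd w, Re d *\<^sub>R snd w + Im d *\<^sub>R fst w)"

definition complexify :: "('a \<Rightarrow> 'a) \<Rightarrow> 'a \<times> 'a \<Rightarrow> 'a \<times> 'a" where
  "complexify T w = (T (fst w), T (snd w))"

lemma cspectrum_iff: "c \<in> cspectrum T \<longleftrightarrow> \<not> bij (\<lambda>w. complexify T w - complex_scaleR c w)"
proof -
  have "(\<lambda>(x, y). (T x - (Re c *\<^sub>R x - Im c *\<^sub>R y), T y - (Re c *\<^sub>R y + Im c *\<^sub>R x)))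
      = (\<lambda>w. complexify T w - complex_scaleR c w)"
    by (auto simp: complexify_def complex_scaleR_def)
  then show ?thesis by (simp add: cspectrum_def)
qed

lemma complex_scaleR_mult: "complex_scaleR d (complex_scaleR e w) = complex_scaleR (d * e) w"
  by (simp add: complex_scaleR_def algebra_simps)

lemma complex_scaleR_one [simp]: "complex_scaleR 1 w = w"
  by (simp add: complex_scaleR_def)

lemma linear_complex_scaleR: "linear (complex_scaleR d)"
  by (rule linearI) (auto simp: complex_scaleR_def algebra_simps)

lemma complex_scaleR_complexify:
  "linear T \<Longrightarrow> complex_scaleR d (complexify T w) = complexify T (complex_scaleR d w)"
  by (simp add: complex_scaleR_def complexify_def linear_diff linear_add linear_scale)

lemma linear_complexify: "linear T \<Longrightarrow> linear (complexify T)"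
  by (rule linearI) (auto simp: complexify_def linear_add linear_scale)

lemma complexify_funpow: "(complexify T ^^ k) w = ((T ^^ k) (fst w), (T ^^ k) (snd w))"
  by (induction k) (auto simp: complexify_def)

lemma norm_complex_scaleR_le: "norm (complex_scaleR d w) \<le> 4 * cmod d * norm w"
proof -
  obtain x y where w: "w = (x, y)" by fastforce
  have xy: "norm x \<le> norm w" "norm y \<le> norm w" using w norm_fst_le norm_snd_le by auto
  have d: "\<bar>Re d\<bar> \<le> cmod d" "\<bar>Im d\<bar> \<le> cmod d" by (auto simp: abs_Re_le_cmod abs_Im_le_cmod)
  have "norm (Re d *\<^sub>R x - Im d *\<^sub>R y) \<le> \<bar>Re d\<bar> * norm x + \<bar>Im d\<bar> * norm y"
    by (metis norm_scaleR norm_triangle_ineq4 real_norm_def)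
  also have "\<dots> \<le> cmod d * norm w + cmod d * norm w"
    using d xy by (intro add_mono mult_mono) auto
  finally have 1: "norm (Re d *\<^sub>R x - Im d *\<^sub>R y) \<le> 2 * cmod d * norm w" by simp
  have "norm (Re d *\<^sub>R y + Im d *\<^sub>R x) \<le> \<bar>Re d\<bar> * norm y + \<bar>Im d\<bar> * norm x"
    by (metis norm_scaleR norm_triangle_ineq real_norm_def)
  also have "\<dots> \<le> cmod d * norm w + cmod d * norm w"
    using d xy by (intro add_mono mult_mono) auto
  finally have 2: "norm (Re d *\<^sub>R y + Im d *\<^sub>R x) \<le> 2 * cmod d * norm w" by simp
  have "norm (complex_scaleR d w) \<le> norm (Re d *\<^sub>R x - Im d *\<^sub>R y) + norm (Re d *\<^sub>R y + Im d *\<^sub>R x)"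
    unfolding complex_scaleR_def w by (simp add: norm_Pair_le)
  then show ?thesis using 1 2 by simp
qed

lemma norm_complexify_funpow_le:
  assumes "\<And>x. norm ((T ^^ k) x) \<le> B * norm x" "0 \<le> B"
  shows "norm ((complexify T ^^ k) w) \<le> 2 * B * norm w"
proof -
  have "norm ((complexify T ^^ k) w) \<le> norm ((T ^^ k) (fst w)) + norm ((T ^^ k) (snd w))"
    unfolding complexify_funpow by (rule norm_Pair_le)
  also have "\<dots> \<le> B * norm (fst w) + B * norm (snd w)"
    using assms(1) by (intro add_mono)
  also have "\<dots> \<le> B * norm w + B * norm w"
    using assms(2) by (intro add_mono mult_left_mono) (metis norm_fst_le norm_snd_le prod.collapse)+
  finally show ?thesis by simp
qed

lemma complexify_shift_eq_iff:
  assumes "c \<noteq> 0"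
  shows "complexify T w - complex_scaleR c w = y
    \<longleftrightarrow> complex_scaleR (inverse c) (complexify T w) + (- complex_scaleR (inverse c) y) = w"
proof -
  have cancel: "complex_scaleR c (complex_scaleR (inverse c) u) = u"
    "complex_scaleR (inverse c) (complex_scaleR c u) = u" for u
    using assms by (simp_all add: complex_scaleR_mult)
  have eq: "complex_scaleR (inverse c) (complexify T w - complex_scaleR c w)
      = complex_scaleR (inverse c) (complexify T w) - w"
    by (simp add: cancel linear_diff[OF linear_complex_scaleR])
  have "complexify T w - complex_scaleR c w = y
      \<longleftrightarrow> complex_scaleR (inverse c) (complexify T w - complex_scaleR c w) = complex_scaleR (inverse c) y"
    by (metis cancel(1))
  also have "\<dots> \<longleftrightarrow> complex_scaleR (inverse c) (complexify T w) + (- complex_scaleR (inverse c) y) = w"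
    unfolding eq by (auto simp: algebra_simps)
  finally show ?thesis .
qed

lemma complexify_power_contraction:
  assumes lin: "linear T" and bound: "\<And>k x. norm ((T ^^ k) x) \<le> M * q ^ k * norm x"
    and M: "0 \<le> M" and q: "0 \<le> q" "q < cmod c"
  shows "\<exists>k. \<forall>w. norm (((\<lambda>w. complex_scaleR (inverse c) (complexify T w)) ^^ k) w) \<le> 1/2 * norm w"
proof -
  define G where "G w = complex_scaleR (inverse c) (complexify T w)" for w
  have G_funpow: "(G ^^ k) w = complex_scaleR (inverse c ^ k) ((complexify T ^^ k) w)" for k w
    by (induction k) (simp_all add: G_def complex_scaleR_complexify[OF lin] complex_scaleR_mult)
  define r where "r = q / cmod c"
  have r: "0 \<le> r" "r < 1" using q by (auto simp: r_def divide_simps)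
  obtain k where k: "r ^ k < 1 / (16 * (M + 1))"
    using real_arch_pow_inv[of "1 / (16 * (M + 1))" r] r M by auto
  have "norm ((G ^^ k) w) \<le> 1/2 * norm w" for w
  proof -
    have "norm ((G ^^ k) w) \<le> 4 * cmod (inverse c ^ k) * norm ((complexify T ^^ k) w)"
      unfolding G_funpow by (rule norm_complex_scaleR_le)
    also have "\<dots> \<le> 4 * cmod (inverse c ^ k) * (2 * (M * q ^ k) * norm w)"
      using bound M q by (intro mult_left_mono norm_complexify_funpow_le) auto
    also have "\<dots> = 8 * M * r ^ k * norm w"
      using q by (simp add: r_def norm_power norm_divide power_divide divide_simps)
    also have "\<dots> \<le> 8 * (M + 1) * (1 / (16 * (M + 1))) * norm w"
      using k M r by (intro mult_right_mono mult_mono) auto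
    also have "\<dots> = 1/2 * norm w" using M by (simp add: divide_simps)
    finally show ?thesis .
  qed
  then show ?thesis unfolding G_def by blast
qed

lemma not_in_cspectrum_of_power_bound:
  fixes T :: "'a::banach \<Rightarrow> 'a"
  assumes lin: "linear T" and bound: "\<And>k x. norm ((T ^^ k) x) \<le> M * q ^ k * norm x"
    and M: "0 \<le> M" and q: "0 \<le> q" "q < cmod c"
  shows "c \<notin> cspectrum T"
proof -
  define G where "G w = complex_scaleR (inverse c) (complexify T w)" for w
  obtain k where "\<And>w. norm ((G ^^ k) w) \<le> 1/2 * norm w"
    using complexify_power_contraction[OF assms] unfolding G_def by blast
  moreover have "linear G"
    unfolding G_def using linear_compose[OF linear_complexify[OF lin] linear_complex_scaleR]
    by (simp add: o_def)
  ultimately have fixpoint: "\<exists>!w. G w + p = w" for p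
    by (intro power_contraction_affine_ex1_fixpoint)
  have "c \<noteq> 0" using q by auto
  have "\<exists>!w. complexify T w - complex_scaleR c w = y" for y
    using fixpoint[of "- complex_scaleR (inverse c) y"]
    by (simp only: G_def complexify_shift_eq_iff[OF \<open>c \<noteq> 0\<close>])
  then have "bij (\<lambda>w. complexify T w - complex_scaleR c w)"
    unfolding bij_iff by blast
  then show ?thesis by (simp add: cspectrum_iff)
qed

lemma norm_funpow_le:
  fixes T :: "'a::real_normed_vector \<Rightarrow> 'a"
  assumes "\<And>x. norm (T x) \<le> B * norm x" "0 \<le> B"
  shows "norm ((T ^^ k) x) \<le> B ^ k * norm x"
proof (induction k)
  case (Suc k)
  have "norm ((T ^^ Suc k) x) \<le> B * norm ((T ^^ k) x)" using assms(1)[of "(T ^^ k) x"] by simp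
  also have "\<dots> \<le> B * (B ^ k * norm x)" using Suc assms(2) by (intro mult_left_mono)
  finally show ?case by simp
qed simp

lemma bdd_above_cmod_cspectrum:
  fixes T :: "'a::banach \<Rightarrow> 'a"
  assumes "bounded_linear T"
  shows "bdd_above (cmod ` cspectrum T)"
proof -
  obtain B where B: "\<And>x. norm (T x) \<le> norm x * B" "B > 0"
    using bounded_linear.pos_bounded[OF assms] by blast
  have "norm ((T ^^ k) x) \<le> 1 * B ^ k * norm x" for k x
    using B norm_funpow_le[of T B k x] by (simp add: mult.commute)
  then have "cmod c \<le> B" if "c \<in> cspectrum T" for c
    using not_in_cspectrum_of_power_bound[of T 1 B c] B that bounded_linear.linear[OF assms]
    by (meson not_le zero_le_one less_imp_le)
  then show ?thesis by (auto simp: bdd_above_def)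
qed

lemma spectral_radius_le_of_power_bound:
  fixes T :: "'a::banach \<Rightarrow> 'a"
  assumes "linear T" "\<And>k x. norm ((T ^^ k) x) \<le> M * q ^ k * norm x" "0 \<le> M" "0 \<le> q"
  shows "spectral_radius T \<le> q"
proof -
  have "cmod c \<le> q" if "c \<in> cspectrum T" for c
    using not_in_cspectrum_of_power_bound[OF assms, of c] that by (meson not_le)
  then show ?thesis
    using \<open>0 \<le> q\<close> by (auto simp: spectral_radius_def intro!: cSup_least)
qed

lemma bij_of_spectral_radius_less:
  fixes T :: "'a::banach \<Rightarrow> 'a"
  assumes T: "bounded_linear T" and m: "spectral_radius T < m"
  shows "bij (\<lambda>x. m *\<^sub>R x - T x)"
proof -
  have "complex_of_real m \<notin> cspectrum T"
  proof
    assume m_in: "complex_of_real m \<in> cspectrum T"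
    then have "cmod (complex_of_real m) \<le> Sup (cmod ` cspectrum T)"
      using bdd_above_cmod_cspectrum[OF T] by (intro cSup_upper imageI)
    then have "m \<le> spectral_radius T" using m_in by (auto simp: spectral_radius_def)
    then show False using m by simp
  qed
  then have bij: "bij (\<lambda>w. complexify T w - complex_scaleR (complex_of_real m) w)"
    by (simp add: cspectrum_iff)
  have pair: "complexify T (x, y) - complex_scaleR (complex_of_real m) (x, y)
      = (- (m *\<^sub>R x - T x), - (m *\<^sub>R y - T y))" for x y
    by (simp add: complexify_def complex_scaleR_def)
  show ?thesis unfolding bij_iff
  proof
    fix y
    obtain w where "complexify T w - complex_scaleR (complex_of_real m) w = (- y, 0)"
      using bij unfolding bij_iff by blast
    then have ex: "m *\<^sub>R fst w - T (fst w) = y"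
      using pair[of "fst w" "snd w"] by simp (metis minus_diff_eq minus_minus)
    have "a = fst w" if "m *\<^sub>R a - T a = y" for a
    proof -
      have "complexify T (a, 0) - complex_scaleR (complex_of_real m) (a, 0)
          = complexify T (fst w, 0) - complex_scaleR (complex_of_real m) (fst w, 0)"
        unfolding pair using ex that by simp
      then have "(a, 0) = (fst w, 0)" using bij_is_inj[OF bij] unfolding inj_def by blast
      then show ?thesis by simp
    qed
    with ex show "\<exists>!a. m *\<^sub>R a - T a = y" by blast
  qed
qed

section \<open>Positive operators on a normal cone with interior\<close>

lemma funpow_tendsto_zero_of_power_bound:
  fixes T :: "'a::real_normed_vector \<Rightarrow> 'a"
  assumes bound: "\<And>k. norm ((T ^^ k) x) \<le> M * l ^ k * norm x" and l: "0 \<le> l" "l < 1"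
  shows "(\<lambda>k. (T ^^ k) x) \<longlonglongrightarrow> 0"
proof (rule Lim_null_comparison)
  show "\<forall>\<^sub>F k in sequentially. norm ((T ^^ k) x) \<le> M * l ^ k * norm x"
    using bound by simp
  have "(\<lambda>k. l ^ k) \<longlonglongrightarrow> 0" using l by (intro LIMSEQ_power_zero) simp
  then show "(\<lambda>k. M * l ^ k * norm x) \<longlonglongrightarrow> 0"
    by (auto intro: tendsto_mult_left_zero tendsto_mult_right_zero)
qed

lemma INF_norm_eq_zero_of_tendsto_zero:
  fixes X :: "nat \<Rightarrow> 'a::real_normed_vector"
  assumes "X \<longlonglongrightarrow> 0"
  shows "(INF k. norm (X k)) = 0"
proof (rule antisym)
  have "bdd_below (range (\<lambda>k. norm (X k)))" by (auto intro: bdd_belowI[of _ 0])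
  then have "\<forall>k. (INF k. norm (X k)) \<le> norm (X k)" by (auto intro: cINF_lower)
  then show "(INF k. norm (X k)) \<le> 0"
    using tendsto_norm_zero[OF assms] by (intro LIMSEQ_le_const) auto
  show "0 \<le> (INF k. norm (X k))" by (rule cINF_greatest) auto
qed

locale pos_operator = normal_pos_cone K for K :: "'a::banach set" +
  fixes T :: "'a \<Rightarrow> 'a"
  assumes T_bounded_linear: "bounded_linear T" and T_positive: "T ` K \<subseteq> K"
    and solid: "interior K \<noteq> {}"
begin

sublocale T: bounded_linear T by (rule T_bounded_linear)

lemma T_cone: "x \<in> K \<Longrightarrow> T x \<in> K"
  using T_positive by blast

lemma funpow_cone: "x \<in> K \<Longrightarrow> (T ^^ k) x \<in> K"
  by (induction k) (auto simp: T_cone)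

lemma linear_funpow: "linear (T ^^ k)"
  by (induction k)
    (simp_all add: linear_id[unfolded id_def] linear_compose[OF _ T.linear, unfolded o_def])

abbreviation small_gain_margin :: "'a \<Rightarrow> real \<Rightarrow> bool" where
  "small_gain_margin z \<eta> \<equiv> \<forall>x\<in>K - {0}. T x - (x - (\<eta> * norm x) *\<^sub>R z) \<notin> K"

abbreviation dual_small_gain :: bool where
  "dual_small_gain \<equiv> \<forall>f::'a \<Rightarrow> real. bounded_linear f \<and> (\<forall>x\<in>K. f x \<ge> 0) \<and> f \<noteq> (\<lambda>_. 0) \<longrightarrow>
     \<not> (\<forall>x\<in>K. (f \<circ> T) x - f x \<ge> 0)"

definition shift :: "real \<Rightarrow> 'a \<Rightarrow> 'a" where
  "shift m x = m *\<^sub>R x - T x"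

definition resolvent :: "real \<Rightarrow> 'a \<Rightarrow> 'a" where
  "resolvent m = inv (shift m)"

definition pos_invertible :: "real \<Rightarrow> bool" where
  "pos_invertible m \<longleftrightarrow> bij (shift m) \<and> resolvent m ` K \<subseteq> K"

lemma linear_shift: "linear (shift m)"
  unfolding shift_def
  by (intro real_vector.linear_compose_sub real_vector.linear_compose_scale_right
      linear_id[unfolded id_def] T.linear)

lemma
  assumes "bij (shift m)"
  shows shift_resolvent: "shift m (resolvent m y) = y"
    and resolvent_shift: "resolvent m (shift m x) = x"
    and linear_resolvent: "linear (resolvent m)"
proof -
  show sr: "shift m (resolvent m y) = y" for y
    using assms unfolding resolvent_def by (simp add: bij_is_surj surj_f_inv_f)
  show rs: "resolvent m (shift m x) = x" for x
    using assms unfolding resolvent_def by (simp add: bij_is_inj)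
  show "linear (resolvent m)"
  proof (rule linearI)
    show "resolvent m (x + y) = resolvent m x + resolvent m y" for x y
      by (metis sr rs linear_add[OF linear_shift])
    show "resolvent m (c *\<^sub>R x) = c *\<^sub>R resolvent m x" for c x
      by (metis sr rs linear_scale[OF linear_shift])
  qed
qed

lemma pos_invertibleD:
  assumes "pos_invertible m"
  shows "bij (shift m)" "y \<in> K \<Longrightarrow> resolvent m y \<in> K"
  using assms unfolding pos_invertible_def by auto

lemma resolvent_norm_bound:
  assumes "z \<in> interior K"
  shows "\<exists>D\<ge>0. \<forall>m y. pos_invertible m \<longrightarrow> norm (resolvent m y) \<le> D * norm (resolvent m z) * norm y"
proof -
  obtain d where d: "d > 0" "\<And>x. (norm x / d) *\<^sub>R z - x \<in> K" "\<And>x. (norm x / d) *\<^sub>R z + x \<in> K"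
    using interior_order_unit[OF assms] by blast
  have "norm (resolvent m y) \<le> (2 * normal_const + 1) / d * norm (resolvent m z) * norm y"
    if m: "pos_invertible m" for m y
  proof -
    note lin = linear_resolvent[OF pos_invertibleD(1)[OF m]]
    define s where "s = norm y / d"
    have "resolvent m (s *\<^sub>R z - y) \<in> K" "resolvent m (s *\<^sub>R z + y) \<in> K"
      using d pos_invertibleD(2)[OF m] by (auto simp: s_def)
    then have "s *\<^sub>R resolvent m z - resolvent m y \<in> K" "s *\<^sub>R resolvent m z + resolvent m y \<in> K"
      by (simp_all add: lin linear_diff linear_add linear_scale)
    from norm_le_of_order_interval[OF this]
    have "norm (resolvent m y) \<le> (2 * normal_const + 1) * (s * norm (resolvent m z))"
      using d by (simp add: s_def)
    then show ?thesis using d by (simp add: s_def field_simps)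
  qed
  moreover have "(2 * normal_const + 1) / d \<ge> 0" using d normal_const_pos by simp
  ultimately show ?thesis by blast
qed

lemma pos_invertible_of_contraction:
  assumes G: "linear G" "\<And>w. norm (G w) \<le> 1/2 * norm w" "\<And>w. w \<in> K \<Longrightarrow> G w \<in> K"
    and P: "\<And>y. y \<in> K \<Longrightarrow> P y \<in> K"
    and eq: "\<And>w y. shift m w = y \<longleftrightarrow> G w + P y = w"
  shows "pos_invertible m"
proof -
  have contr: "norm ((G ^^ 1) w) \<le> 1/2 * norm w" for w using G(2) by simp
  have "\<exists>!w. shift m w = y" for y
    using power_contraction_affine_ex1_fixpoint[OF G(1) contr] eq by presburger
  then have b: "bij (shift m)" unfolding bij_iff by blast
  have "resolvent m y \<in> K" if y: "y \<in> K" for y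
  proof -
    obtain w where "w \<in> K" "G w + P y = w"
      using power_contraction_fixpoint_exists[OF G(1) contr, of K "P y"]
        closed_cone cone_zero G(3) P[OF y] cone_add by auto
    then show ?thesis using eq resolvent_shift[OF b] by metis
  qed
  with b show ?thesis unfolding pos_invertible_def by blast
qed

lemma pos_invertible_large: "\<exists>m0. \<forall>m\<ge>m0. pos_invertible m"
proof -
  obtain B where B: "\<And>x. norm (T x) \<le> norm x * B" "B > 0" using T.pos_bounded by blast
  have "pos_invertible m" if m: "m \<ge> 2 * B" for m
  proof (rule pos_invertible_of_contraction)
    have "m > 0" using m B by simp
    show "linear (\<lambda>w. (1/m) *\<^sub>R T w)"
      by (intro real_vector.linear_compose_scale_right T.linear)
    show "norm ((1/m) *\<^sub>R T w) \<le> 1/2 * norm w" for w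
      using B(1)[of w] mult_right_mono[OF m norm_ge_zero[of w]] \<open>m > 0\<close> by (simp add: field_simps)
    show "(1/m) *\<^sub>R T w \<in> K" if "w \<in> K" for w
      using cone_scaleR[OF T_cone[OF that]] \<open>m > 0\<close> by simp
    show "(1/m) *\<^sub>R y \<in> K" if "y \<in> K" for y
      using cone_scaleR[OF that] \<open>m > 0\<close> by simp
    show "shift m w = y \<longleftrightarrow> (1/m) *\<^sub>R T w + (1/m) *\<^sub>R y = w" for w y
    proof -
      have "shift m w = y \<longleftrightarrow> m *\<^sub>R w = y + T w" unfolding shift_def by (rule diff_eq_eq)
      also have "\<dots> \<longleftrightarrow> (1/m) *\<^sub>R (y + T w) = w"
      proof
        assume "m *\<^sub>R w = y + T w"
        then show "(1/m) *\<^sub>R (y + T w) = w" using \<open>m > 0\<close> by (simp flip: \<open>m *\<^sub>R w = y + T w\<close>)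
      next
        assume "(1/m) *\<^sub>R (y + T w) = w"
        then have "m *\<^sub>R w = m *\<^sub>R ((1/m) *\<^sub>R (y + T w))" by simp
        then show "m *\<^sub>R w = y + T w" using \<open>m > 0\<close> by simp
      qed
      also have "(1/m) *\<^sub>R (y + T w) = (1/m) *\<^sub>R T w + (1/m) *\<^sub>R y"
        by (simp add: scaleR_add_right add.commute)
      finally show ?thesis .
    qed
  qed
  then show ?thesis by blast
qed

lemma pos_invertible_step_down:
  assumes m: "pos_invertible m" and B: "\<And>y. norm (resolvent m y) \<le> B * norm y" "B > 0"
    and l: "m - 1 / (2 * B) \<le> l" "l \<le> m"
  shows "pos_invertible l"
proof -
  note b = pos_invertibleD(1)[OF m]
  note lin = linear_resolvent[OF b]
  define h where "h = m - l"
  have h: "h \<ge> 0" "h * B \<le> 1/2" using l B(2) by (auto simp: h_def field_simps)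
  show ?thesis
  proof (rule pos_invertible_of_contraction[where G = "\<lambda>w. h *\<^sub>R resolvent m w" and P = "resolvent m"])
    show "linear (\<lambda>w. h *\<^sub>R resolvent m w)" by (intro real_vector.linear_compose_scale_right lin)
    show "norm (h *\<^sub>R resolvent m w) \<le> 1/2 * norm w" for w
    proof -
      have "norm (h *\<^sub>R resolvent m w) \<le> h * (B * norm w)" using B(1) h by (simp add: mult_left_mono)
      also have "\<dots> \<le> 1/2 * norm w" using h by (metis mult.assoc mult_right_mono norm_ge_zero)
      finally show ?thesis .
    qed
    show "h *\<^sub>R resolvent m w \<in> K" if "w \<in> K" for w
      using cone_scaleR[OF pos_invertibleD(2)[OF m that] h(1)] .
    show "resolvent m y \<in> K" if "y \<in> K" for y using pos_invertibleD(2)[OF m that] .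
    show "shift l w = y \<longleftrightarrow> h *\<^sub>R resolvent m w + resolvent m y = w" for w y
    proof -
      have "h *\<^sub>R resolvent m w + resolvent m y = resolvent m (h *\<^sub>R w + y)"
        by (simp add: lin linear_add linear_scale)
      then have "h *\<^sub>R resolvent m w + resolvent m y = w \<longleftrightarrow> h *\<^sub>R w + y = shift m w"
        by (metis shift_resolvent[OF b] resolvent_shift[OF b])
      also have "\<dots> \<longleftrightarrow> shift l w = y" by (auto simp: shift_def h_def algebra_simps)
      finally show ?thesis by simp
    qed
  qed
qed

lemma pos_invertible_extend_below:
  assumes z: "z \<in> interior K" and above: "\<And>\<mu>. m < \<mu> \<Longrightarrow> pos_invertible \<mu>"
    and \<epsilon>: "\<epsilon> > 0" and C: "\<And>\<mu>. m < \<mu> \<Longrightarrow> \<mu> < m + \<epsilon> \<Longrightarrow> norm (resolvent \<mu> z) \<le> C"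
  shows "\<exists>\<delta>>0. \<forall>l. m - \<delta> < l \<longrightarrow> pos_invertible l"
proof -
  obtain D where D: "D \<ge> 0"
    "\<And>m y. pos_invertible m \<Longrightarrow> norm (resolvent m y) \<le> D * norm (resolvent m z) * norm y"
    using resolvent_norm_bound[OF z] by blast
  define B where "B = D * max C 0 + 1"
  have B: "B > 0" using D by (simp add: B_def add_nonneg_pos)
  define \<delta> where "\<delta> = min (\<epsilon> / 2) (1 / (4 * B))"
  have "1 / (4 * B) < 1 / (2 * B)" using B by (simp add: divide_strict_left_mono)
  then have \<delta>: "0 < \<delta>" "\<delta> < \<epsilon>" "\<delta> < 1 / (2 * B)" using \<epsilon> B by (auto simp: \<delta>_def)
  define \<mu> where "\<mu> = m + \<delta>"
  have \<mu>: "m < \<mu>" "\<mu> < m + \<epsilon>" using \<delta> by (simp_all add: \<mu>_def)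
  have \<mu>_bound: "norm (resolvent \<mu> y) \<le> B * norm y" for y
  proof -
    have "D * norm (resolvent \<mu> z) \<le> D * max C 0"
      using C[OF \<mu>] D(1) by (intro mult_left_mono) auto
    then have "D * norm (resolvent \<mu> z) \<le> B" by (simp add: B_def)
    then show ?thesis
      using D(2)[OF above[OF \<mu>(1)], of y] by (meson mult_right_mono norm_ge_zero order_trans)
  qed
  have "pos_invertible l" if l: "\<mu> - 1 / (2 * B) \<le> l" for l
  proof (cases "m < l")
    case False
    then have "l \<le> \<mu>" using \<mu>(1) by simp
    with l show ?thesis using pos_invertible_step_down[OF above[OF \<mu>(1)] \<mu>_bound B] by blast
  qed (rule above)
  moreover have "m - (1 / (2 * B) - \<delta>) = \<mu> - 1 / (2 * B)" by (simp add: \<mu>_def)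
  ultimately show ?thesis using \<delta>(3) by (intro exI[of _ "1 / (2 * B) - \<delta>"]) auto
qed

text \<open>Continuation from large m down to 1: positive invertibility propagates to the left of
  m as long as the resolvent stays bounded to the right of m.\<close>
lemma pos_invertible_one_of_local_bound:
  assumes z: "z \<in> interior K"
    and local_bound: "\<And>m. 1 \<le> m \<Longrightarrow> (\<forall>\<mu>>m. pos_invertible \<mu>) \<Longrightarrow>
      \<exists>\<epsilon>>0. \<exists>C. \<forall>\<mu>. m < \<mu> \<and> \<mu> < m + \<epsilon> \<longrightarrow> norm (resolvent \<mu> z) \<le> C"
  shows "pos_invertible 1"
proof (rule ccontr)
  assume not_one: "\<not> pos_invertible 1"
  define Q where "Q = {m. \<forall>\<mu>>m. pos_invertible \<mu>}"
  obtain m0 where "\<forall>m\<ge>m0. pos_invertible m" using pos_invertible_large by blast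
  then have Qne: "Q \<noteq> {}" unfolding Q_def by (auto intro: less_imp_le)
  have Q_ge: "1 \<le> q" if "q \<in> Q" for q using that not_one by (force simp: Q_def)
  then have Qbdd: "bdd_below Q" by (auto simp: bdd_below_def)
  define m where "m = Inf Q"
  have m1: "1 \<le> m" unfolding m_def using Qne Q_ge by (rule cInf_greatest)
  have above: "pos_invertible \<mu>" if \<mu>: "m < \<mu>" for \<mu>
  proof -
    obtain q where "q \<in> Q" "q < \<mu>" using cInf_lessD[OF Qne] \<mu> unfolding m_def by blast
    then show ?thesis by (auto simp: Q_def)
  qed
  obtain \<epsilon> C where "\<epsilon> > 0" "\<And>\<mu>. m < \<mu> \<Longrightarrow> \<mu> < m + \<epsilon> \<Longrightarrow> norm (resolvent \<mu> z) \<le> C"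
    using local_bound[OF m1] above by blast
  then obtain \<delta> where \<delta>: "\<delta> > 0" "\<And>l. m - \<delta> < l \<Longrightarrow> pos_invertible l"
    using pos_invertible_extend_below[OF z above] by blast
  then have "m - \<delta> / 2 \<in> Q" by (simp add: Q_def)
  then have "m \<le> m - \<delta> / 2" unfolding m_def using Qbdd by (rule cInf_lower)
  with \<delta>(1) show False by simp
qed

text \<open>With v = (m - T)\<inverse> z and u = (\<mu> - T)\<inverse> z one has v = u + (\<mu> - m) (\<mu> - T)\<inverse> v, which in
  the order gives (1 - (\<mu> - m) a) u \<le> v.\<close>
lemma norm_resolvent_le_nearby:
  assumes z: "z \<in> K" and m: "bij (shift m)" and \<mu>: "m < \<mu>" "pos_invertible \<mu>"
    and a: "resolvent m z + a *\<^sub>R z \<in> K" "0 \<le> a" "(\<mu> - m) * a \<le> 1/2"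
  shows "norm (resolvent \<mu> z) \<le> 2 * normal_const * norm (resolvent m z)"
proof -
  note b = pos_invertibleD(1)[OF \<mu>(2)] and pos = pos_invertibleD(2)[OF \<mu>(2)]
  note lin = linear_resolvent[OF b]
  define v where "v = resolvent m z"
  define u where "u = resolvent \<mu> z"
  define h where "h = \<mu> - m"
  have h: "h > 0" "h * a \<le> 1/2" using \<mu>(1) a(3) by (simp_all add: h_def)
  have "shift \<mu> v = z + h *\<^sub>R v"
    using shift_resolvent[OF m, of z] by (simp add: v_def shift_def h_def algebra_simps)
  then have "v = resolvent \<mu> (z + h *\<^sub>R v)" using resolvent_shift[OF b] by metis
  then have v_eq: "v = u + h *\<^sub>R resolvent \<mu> v" by (simp add: u_def lin linear_add linear_scale)
  have "resolvent \<mu> v + a *\<^sub>R u \<in> K"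
    using pos[OF a(1)] by (simp add: u_def v_def lin linear_add linear_scale)
  then have "h *\<^sub>R (resolvent \<mu> v + a *\<^sub>R u) \<in> K" using h(1) cone_scaleR by simp
  moreover have "h *\<^sub>R (resolvent \<mu> v + a *\<^sub>R u) = v - (1 - h * a) *\<^sub>R u"
    by (subst (2) v_eq) (simp add: algebra_simps)
  ultimately have "v - (1 - h * a) *\<^sub>R u \<in> K" by simp
  moreover have "(1 - h * a) *\<^sub>R u \<in> K" using pos[OF z] h(2) by (simp add: u_def cone_scaleR)
  ultimately have "norm ((1 - h * a) *\<^sub>R u) \<le> normal_const * norm v"
    by (intro norm_le_normal_const)
  then have "(1 - h * a) * norm u \<le> normal_const * norm v" using h(2) by simp
  moreover have "1/2 * norm u \<le> (1 - h * a) * norm u" using h by (intro mult_right_mono) auto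
  ultimately show ?thesis by (simp add: u_def v_def)
qed

lemma resolvent_local_bound_of_bij:
  assumes z: "z \<in> interior K" and m: "bij (shift m)"
  shows "\<exists>\<epsilon>>0. \<exists>C. \<forall>\<mu>. m < \<mu> \<and> \<mu> < m + \<epsilon> \<and> pos_invertible \<mu> \<longrightarrow> norm (resolvent \<mu> z) \<le> C"
proof -
  obtain a where "a > 0" "a *\<^sub>R z - (- resolvent m z) \<in> K"
    using interior_cone_dominates[OF z] by blast
  then have a: "a \<ge> 0" "resolvent m z + a *\<^sub>R z \<in> K" by (simp_all add: add.commute)
  define \<epsilon> where "\<epsilon> = 1 / (2 * (a + 1))"
  have "(\<mu> - m) * a \<le> 1/2" if "\<mu> < m + \<epsilon>" for \<mu>
  proof -
    have "(\<mu> - m) * a \<le> \<epsilon> * a" using that a by (intro mult_right_mono) auto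
    also have "\<epsilon> * a \<le> 1/2" using a by (simp add: \<epsilon>_def field_simps)
    finally show ?thesis .
  qed
  then have "norm (resolvent \<mu> z) \<le> 2 * normal_const * norm (resolvent m z)"
    if "m < \<mu>" "\<mu> < m + \<epsilon>" "pos_invertible \<mu>" for \<mu>
    using norm_resolvent_le_nearby[OF _ m _ _ a(2,1)] z interior_subset that by blast
  moreover have "\<epsilon> > 0" using a by (simp add: \<epsilon>_def)
  ultimately show ?thesis by blast
qed

lemma pos_invertible_one_of_spectral_radius:
  assumes "spectral_radius T < 1"
  shows "pos_invertible 1"
proof -
  obtain z where z: "z \<in> interior K" using solid by blast
  have bij: "bij (shift m)" if "1 \<le> m" for m
  proof -
    have "shift m = (\<lambda>x. m *\<^sub>R x - T x)" by (rule ext) (simp add: shift_def)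
    then show ?thesis using bij_of_spectral_radius_less[OF T_bounded_linear, of m] assms that by simp
  qed
  show ?thesis
  proof (rule pos_invertible_one_of_local_bound[OF z])
    fix m :: real assume m: "1 \<le> m" "\<forall>\<mu>>m. pos_invertible \<mu>"
    obtain \<epsilon> C where "\<epsilon> > 0" "\<forall>\<mu>. m < \<mu> \<and> \<mu> < m + \<epsilon> \<and> pos_invertible \<mu> \<longrightarrow> norm (resolvent \<mu> z) \<le> C"
      using resolvent_local_bound_of_bij[OF z bij[OF m(1)]] by blast
    with m(2) show "\<exists>\<epsilon>>0. \<exists>C. \<forall>\<mu>. m < \<mu> \<and> \<mu> < m + \<epsilon> \<longrightarrow> norm (resolvent \<mu> z) \<le> C"
      by auto
  qed
qed

lemma norm_resolvent_le_of_small_gain: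
  assumes z: "z \<in> K" and \<eta>: "\<eta> > 0" and margin: "small_gain_margin z \<eta>"
    and \<mu>: "1 \<le> \<mu>" "pos_invertible \<mu>"
  shows "\<eta> * norm (resolvent \<mu> z) \<le> 1"
proof (rule ccontr)
  define u where "u = resolvent \<mu> z"
  assume "\<not> \<eta> * norm (resolvent \<mu> z) \<le> 1"
  then have big: "\<eta> * norm u - 1 \<ge> 0" "u \<noteq> 0" by (auto simp: u_def)
  have uK: "u \<in> K" using pos_invertibleD(2)[OF \<mu>(2) z] by (simp add: u_def)
  have "\<mu> *\<^sub>R u - T u = z"
    using shift_resolvent[OF pos_invertibleD(1)[OF \<mu>(2)], of z] by (simp add: u_def shift_def)
  then have "T u = \<mu> *\<^sub>R u - z" by (simp add: eq_diff_eq diff_eq_eq add.commute)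
  then have "T u - (u - (\<eta> * norm u) *\<^sub>R z) = (\<mu> - 1) *\<^sub>R u + (\<eta> * norm u - 1) *\<^sub>R z"
    by (simp add: algebra_simps)
  also have "\<dots> \<in> K" using \<mu>(1) big z uK by (intro cone_add cone_scaleR) auto
  finally show False using margin uK big(2) by blast
qed

lemma pos_invertible_one_of_small_gain:
  assumes z: "z \<in> interior K" and "\<eta> > 0" "small_gain_margin z \<eta>"
  shows "pos_invertible 1"
proof (rule pos_invertible_one_of_local_bound[OF z])
  have "norm (resolvent \<mu> z) \<le> 1 / \<eta>" if "1 \<le> \<mu>" "pos_invertible \<mu>" for \<mu>
    using norm_resolvent_le_of_small_gain[of z \<eta> \<mu>] z interior_subset assms(2,3) that
    by (auto simp: le_divide_eq mult.commute)
  then show "\<exists>\<epsilon>>0. \<exists>C. \<forall>\<mu>. m < \<mu> \<and> \<mu> < m + \<epsilon> \<longrightarrow> norm (resolvent \<mu> z) \<le> C"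
    if "1 \<le> m" "\<forall>\<mu>>m. pos_invertible \<mu>" for m
    using that by (intro exI[of _ 1] conjI exI[of _ "1 / \<eta>"] allI impI) auto
qed

lemma interior_subinvariant_of_pos_invertible_one:
  assumes "pos_invertible 1"
  shows "\<exists>z\<in>interior K. z - T z \<in> interior K"
proof -
  obtain z where z: "z \<in> interior K" using solid by blast
  define w where "w = resolvent 1 z"
  have wz: "w - T w = z"
    using shift_resolvent[OF pos_invertibleD(1)[OF assms]] by (simp add: w_def shift_def)
  have "w \<in> K" using pos_invertibleD(2)[OF assms] z interior_subset by (auto simp: w_def)
  then have "z + T w \<in> interior K" using z by (intro interior_cone_add T_cone)
  moreover have "w = z + T w" using wz by (simp add: diff_eq_eq)
  ultimately show ?thesis using wz z by (intro bexI[of _ w]) simp_all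
qed

lemma subeigen_of_interior_subinvariant:
  assumes z: "z \<in> interior K" and zT: "z - T z \<in> interior K"
  shows "\<exists>l. 0 < l \<and> l < 1 \<and> l *\<^sub>R z - T z \<in> K"
proof -
  obtain \<epsilon> where \<epsilon>: "\<epsilon> > 0" "\<And>t. \<bar>t\<bar> \<le> \<epsilon> \<Longrightarrow> (z - T z) + t *\<^sub>R (- z) \<in> interior K"
    using interior_perturb[OF zT] by blast
  define t where "t = min \<epsilon> (1/2)"
  have "(z - T z) + t *\<^sub>R (- z) \<in> K" using \<epsilon> interior_subset by (force simp: t_def)
  then have "(1 - t) *\<^sub>R z - T z \<in> K" by (simp add: algebra_simps)
  moreover have "0 < 1 - t" "1 - t < 1" using \<epsilon> by (auto simp: t_def)
  ultimately show ?thesis by blast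
qed

lemma funpow_subeigen:
  assumes "z \<in> K" "0 \<le> l" "l *\<^sub>R z - T z \<in> K"
  shows "l ^ k *\<^sub>R z - (T ^^ k) z \<in> K"
proof (induction k)
  case 0 then show ?case by (simp add: cone_zero)
next
  case (Suc k)
  have "l ^ k *\<^sub>R (l *\<^sub>R z - T z) + T (l ^ k *\<^sub>R z - (T ^^ k) z) \<in> K"
    using assms Suc by (intro cone_add cone_scaleR T_cone) auto
  also have "l ^ k *\<^sub>R (l *\<^sub>R z - T z) + T (l ^ k *\<^sub>R z - (T ^^ k) z) = l ^ Suc k *\<^sub>R z - (T ^^ Suc k) z"
    by (simp add: T.diff T.scaleR algebra_simps)
  finally show ?case .
qed

text \<open>T^k maps the order interval [-s z, s z] into [-s l^k z, s l^k z], and normality turns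
  this into a norm bound.\<close>
lemma geometric_power_bound:
  assumes z: "z \<in> interior K" and l: "0 \<le> l" "l *\<^sub>R z - T z \<in> K"
  shows "\<exists>M\<ge>0. \<forall>k x. norm ((T ^^ k) x) \<le> M * l ^ k * norm x"
proof -
  obtain d where d: "d > 0" "\<And>x. (norm x / d) *\<^sub>R z - x \<in> K" "\<And>x. (norm x / d) *\<^sub>R z + x \<in> K"
    using interior_order_unit[OF z] by blast
  have zK: "z \<in> K" using z interior_subset by blast
  have "norm ((T ^^ k) x) \<le> ((2 * normal_const + 1) / d * norm z) * l ^ k * norm x" for k x
  proof -
    note lin = linear_funpow[of k]
    define s where "s = norm x / d"
    have s: "s \<ge> 0" using d by (simp add: s_def)
    have pow: "s *\<^sub>R (l ^ k *\<^sub>R z - (T ^^ k) z) \<in> K"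
      using cone_scaleR[OF funpow_subeigen[OF zK l] s] .
    have "(T ^^ k) (s *\<^sub>R z - x) \<in> K" "(T ^^ k) (s *\<^sub>R z + x) \<in> K"
      using d funpow_cone by (auto simp: s_def)
    then have "s *\<^sub>R (T ^^ k) z - (T ^^ k) x \<in> K" "s *\<^sub>R (T ^^ k) z + (T ^^ k) x \<in> K"
      by (simp_all add: lin linear_diff linear_add linear_scale)
    from this[THEN cone_add, OF pow]
    have "(s * l ^ k) *\<^sub>R z - (T ^^ k) x \<in> K" "(s * l ^ k) *\<^sub>R z + (T ^^ k) x \<in> K"
      by (simp_all add: algebra_simps)
    from norm_le_of_order_interval[OF this]
    have "norm ((T ^^ k) x) \<le> (2 * normal_const + 1) * (s * l ^ k * norm z)"
      using s l by (simp add: abs_mult)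
    then show ?thesis using d by (simp add: s_def field_simps)
  qed
  moreover have "0 \<le> (2 * normal_const + 1) / d * norm z" using d normal_const_pos by simp
  ultimately show ?thesis by blast
qed

lemma dual_small_gain_of_INF_norm:
  assumes viii: "\<forall>x\<in>K. (INF k. norm ((T ^^ k) x)) = 0"
  shows dual_small_gain
proof (intro allI impI notI)
  fix f :: "'a \<Rightarrow> real"
  assume f: "bounded_linear f \<and> (\<forall>x\<in>K. f x \<ge> 0) \<and> f \<noteq> (\<lambda>_. 0)"
    and sup: "\<forall>x\<in>K. (f \<circ> T) x - f x \<ge> 0"
  obtain B where B: "\<And>x. norm (f x) \<le> norm x * B" "B > 0"
    using bounded_linear.pos_bounded f by blast
  have "f x = 0" if x: "x \<in> K" for x
  proof -
    have mono: "f x \<le> f ((T ^^ k) x)" for k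
    proof (induction k)
      case (Suc k)
      then show ?case using sup funpow_cone[OF x, of k] by auto
    qed simp
    have "f x / B \<le> norm ((T ^^ k) x)" for k
    proof -
      have "f x \<le> norm (f ((T ^^ k) x))" using mono[of k] abs_ge_self[of "f ((T ^^ k) x)"] by simp
      also have "\<dots> \<le> norm ((T ^^ k) x) * B" by (rule B(1))
      finally show ?thesis using B(2) by (simp add: divide_simps)
    qed
    then have "f x / B \<le> (INF k. norm ((T ^^ k) x))" by (intro cINF_greatest) auto
    then have "f x \<le> 0" using viii x B(2) by (simp add: divide_le_0_iff)
    then show ?thesis using f x by force
  qed
  then have "f = (\<lambda>_. 0)"
    using f solid by (intro linear_eq_zero_on_solid_cone) (auto simp: bounded_linear.linear)
  then show False using f by blast
qed

lemma subinvariant_cone_disjoint_interior: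
  assumes none: "\<not> (\<exists>z\<in>interior K. z - T z \<in> interior K)" and bk: "b \<in> K" "k \<in> K"
  shows "b - T b - k \<notin> interior K"
proof
  assume "b - T b - k \<in> interior K"
  from interior_cone_add[OF this bk(2)] have b: "b - T b \<in> interior K" by simp
  obtain z where z: "z \<in> interior K" using solid by blast
  obtain \<epsilon> where \<epsilon>: "\<epsilon> > 0" "(b - T b) + \<epsilon> *\<^sub>R (z - T z) \<in> interior K"
    using interior_perturb[OF b, of "z - T z"] by (metis abs_of_pos order_refl)
  have "\<epsilon> *\<^sub>R z + b \<in> interior K" by (intro interior_cone_add interior_cone_scaleR z \<epsilon>(1) bk(1))
  moreover have "(\<epsilon> *\<^sub>R z + b) - T (\<epsilon> *\<^sub>R z + b) = (b - T b) + \<epsilon> *\<^sub>R (z - T z)"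
    by (simp add: T.add T.scaleR algebra_simps)
  ultimately show False using none \<epsilon>(2) by metis
qed

text \<open>If no interior point is strictly subinvariant, the convex cone of all b - T b - k with
  b, k \<in> K misses the interior of K; a functional separating it from an interior point is the
  positive subinvariant functional excluded by the dual small-gain condition.\<close>
lemma interior_subinvariant_of_dual_small_gain:
  assumes dual: dual_small_gain
  shows "\<exists>z\<in>interior K. z - T z \<in> interior K"
proof (rule ccontr)
  assume none: "\<not> (\<exists>z\<in>interior K. z - T z \<in> interior K)"
  obtain z where z: "z \<in> interior K" using solid by blast
  define W where "W = {b - T b - k | b k. b \<in> K \<and> k \<in> K}"
  have W_add: "u + v \<in> W" if uv: "u \<in> W" "v \<in> W" for u v
  proof -
    obtain b k b' k' where bk: "b \<in> K" "k \<in> K" "b' \<in> K" "k' \<in> K"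
      and u: "u = b - T b - k" and v: "v = b' - T b' - k'"
      using uv unfolding W_def by blast
    have "u + v = (b + b') - T (b + b') - (k + k')" by (simp add: u v T.add algebra_simps)
    then show ?thesis unfolding W_def using bk by (blast intro: cone_add)
  qed
  have W_scaleR: "t *\<^sub>R u \<in> W" if u: "u \<in> W" and t: "0 \<le> t" for u t
  proof -
    obtain b k where bk: "b \<in> K" "k \<in> K" and u: "u = b - T b - k"
      using u unfolding W_def by blast
    have "t *\<^sub>R u = t *\<^sub>R b - T (t *\<^sub>R b) - t *\<^sub>R k" by (simp add: u T.scaleR algebra_simps)
    then show ?thesis unfolding W_def using bk t by (blast intro: cone_scaleR)
  qed
  have W_neg: "- k \<in> W" if "k \<in> K" for k
    using that cone_zero unfolding W_def by force
  have W_sub: "b - T b \<in> W" if "b \<in> K" for b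
    using that cone_zero unfolding W_def by force
  have "W \<inter> interior K = {}"
    using subinvariant_cone_disjoint_interior[OF none] unfolding W_def by blast
  then interpret cone_separation K W z
    using z W_add W_scaleR W_neg by unfold_locales (simp_all add: ordered_cone)
  obtain f :: "'a \<Rightarrow> real" where f: "bounded_linear f" "f z = 1" "\<And>w. w \<in> W \<Longrightarrow> f w \<le> 0"
    using separating_functional by blast
  have "\<forall>x\<in>K. f x \<ge> 0" using f(3)[OF W_neg] linear_neg[OF bounded_linear.linear[OF f(1)]] by simp
  moreover have "\<forall>x\<in>K. (f \<circ> T) x - f x \<ge> 0"
    using f(3)[OF W_sub] linear_diff[OF bounded_linear.linear[OF f(1)]] by simp
  moreover have "f \<noteq> (\<lambda>_. 0)" using f(2) by auto
  ultimately show False using dual f(1) by blast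
qed

text \<open>Iterating T x + e z \<ge> x against the subeigenvector inequality T z \<le> l z; the constant
  e / (1 - l) is the fixed point of E \<mapsto> l E + e.\<close>
lemma le_funpow_of_subeigen:
  assumes z: "z \<in> K" and l: "l < 1" "l *\<^sub>R z - T z \<in> K" and e: "0 \<le> e"
    and x: "T x - x + e *\<^sub>R z \<in> K"
  shows "(T ^^ n) x + (e / (1 - l)) *\<^sub>R z - x \<in> K"
proof (induction n)
  case 0
  show ?case using cone_scaleR[OF z, of "e / (1 - l)"] e l by simp
next
  case (Suc n)
  define E where "E = e / (1 - l)"
  have "E \<ge> 0" using e l by (simp add: E_def)
  have "T ((T ^^ n) x + E *\<^sub>R z - x) + E *\<^sub>R (l *\<^sub>R z - T z) + (T x - x + e *\<^sub>R z) \<in> K"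
    using cone_add[OF cone_add[OF T_cone[OF Suc[folded E_def]] cone_scaleR[OF l(2) \<open>E \<ge> 0\<close>]] x] .
  also have "T ((T ^^ n) x + E *\<^sub>R z - x) + E *\<^sub>R (l *\<^sub>R z - T z) + (T x - x + e *\<^sub>R z)
      = (T ^^ Suc n) x + (l * E + e) *\<^sub>R z - x"
    by (simp add: T.add T.diff T.scaleR algebra_simps)
  also have "l * E + e = E" using l by (simp add: E_def field_simps)
  finally show ?case by (simp add: E_def)
qed

lemma norm_le_of_subinvariance_defect:
  assumes z: "z \<in> K" and l: "l < 1" "l *\<^sub>R z - T z \<in> K" and e: "0 \<le> e"
    and x: "x \<in> K" "T x - x + e *\<^sub>R z \<in> K"
    and M: "\<And>k x. norm ((T ^^ k) x) \<le> M * l ^ k * norm x"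
  shows "norm x \<le> normal_const * (M * l ^ n * norm x + e / (1 - l) * norm z)"
proof -
  have "norm x \<le> normal_const * norm ((T ^^ n) x + (e / (1 - l)) *\<^sub>R z)"
    using norm_le_normal_const[OF x(1) le_funpow_of_subeigen[OF z l e x(2)]] .
  also have "\<dots> \<le> normal_const * (M * l ^ n * norm x + e / (1 - l) * norm z)"
  proof (rule mult_left_mono)
    show "norm ((T ^^ n) x + (e / (1 - l)) *\<^sub>R z) \<le> M * l ^ n * norm x + e / (1 - l) * norm z"
      using M[of n x] e l norm_triangle_ineq[of "(T ^^ n) x" "(e / (1 - l)) *\<^sub>R z"] by simp
  qed (use normal_const_pos in simp)
  finally show ?thesis .
qed

lemma small_gain_margin_of_subeigen:
  assumes z: "z \<in> interior K" and l: "0 < l" "l < 1" "l *\<^sub>R z - T z \<in> K"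
  shows "\<exists>\<eta>>0. small_gain_margin z' \<eta>"
proof -
  define C where "C = normal_const"
  have C: "C > 0" using normal_const_pos by (simp add: C_def)
  have zK: "z \<in> K" using z interior_subset by blast
  obtain M where M: "0 \<le> M" "\<And>k x. norm ((T ^^ k) x) \<le> M * l ^ k * norm x"
    using geometric_power_bound[OF z less_imp_le[OF l(1)] l(3)] by blast
  have "(\<lambda>n. C * M * l ^ n) \<longlonglongrightarrow> 0"
    using l by (intro tendsto_mult_right_zero LIMSEQ_power_zero) simp
  from order_tendstoD(2)[OF this, of "1/4"] obtain n where n: "C * M * l ^ n < 1/4"
    by (auto simp: eventually_sequentially)
  obtain \<gamma> where \<gamma>: "\<gamma> > 0" and \<gamma>z: "\<gamma> *\<^sub>R z - z' \<in> K"
    using interior_cone_dominates[OF z] by blast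
  define \<kappa> where "\<kappa> = C * \<gamma> * (norm z + 1) / (1 - l)"
  have \<kappa>: "\<kappa> > 0" unfolding \<kappa>_def using C \<gamma> l by (intro divide_pos_pos mult_pos_pos add_nonneg_pos) auto
  define \<eta> where "\<eta> = 1 / (4 * \<kappa>)"
  have \<eta>: "\<eta> > 0" using \<kappa> by (simp add: \<eta>_def)
  have "T x - (x - (\<eta> * norm x) *\<^sub>R z') \<notin> K" if x: "x \<in> K" "x \<noteq> 0" for x
  proof
    assume margin: "T x - (x - (\<eta> * norm x) *\<^sub>R z') \<in> K"
    define e where "e = \<eta> * norm x * \<gamma>"
    have e: "0 \<le> e" using \<eta> \<gamma> by (simp add: e_def)
    have "T x - x + e *\<^sub>R z = (T x - (x - (\<eta> * norm x) *\<^sub>R z')) + (\<eta> * norm x) *\<^sub>R (\<gamma> *\<^sub>R z - z')"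
      by (simp add: e_def algebra_simps)
    also have "\<dots> \<in> K" using margin \<eta> \<gamma>z by (intro cone_add cone_scaleR) simp_all
    finally have defect: "T x - x + e *\<^sub>R z \<in> K" .
    have "norm x \<le> C * (M * l ^ n * norm x) + C * (e / (1 - l) * norm z)"
      using norm_le_of_subinvariance_defect[OF zK l(2,3) e x(1) defect M(2)]
      by (simp add: C_def distrib_left)
    also have "C * (e / (1 - l) * norm z) = (C * \<gamma> * norm z / (1 - l)) * \<eta> * norm x"
      by (simp add: e_def)
    also have "\<dots> \<le> \<kappa> * \<eta> * norm x"
      unfolding \<kappa>_def using C \<gamma> l \<eta>
      by (intro mult_right_mono divide_right_mono mult_left_mono) auto
    also have "\<kappa> * \<eta> = 1/4" using \<kappa> by (simp add: \<eta>_def)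
    also have "C * (M * l ^ n * norm x) \<le> 1/4 * norm x"
      using mult_right_mono[OF less_imp_le[OF n] norm_ge_zero[of x]] by (simp add: mult.assoc)
    finally have "norm x \<le> 1/2 * norm x" by simp
    then show False using x(2) by simp
  qed
  then show ?thesis using \<eta> by blast
qed

lemma spectral_radius_less_one_of_subeigen:
  assumes "z \<in> interior K" "0 < l" "l < 1" "l *\<^sub>R z - T z \<in> K"
  shows "spectral_radius T < 1"
proof -
  obtain M where "0 \<le> M" "\<And>k x. norm ((T ^^ k) x) \<le> M * l ^ k * norm x"
    using geometric_power_bound[OF assms(1) less_imp_le[OF assms(2)] assms(4)] by blast
  then have "spectral_radius T \<le> l"
    using assms by (intro spectral_radius_le_of_power_bound[OF T.linear]) auto
  with assms show ?thesis by simp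
qed

lemma funpow_tendsto_zero_of_subeigen:
  assumes "z \<in> interior K" "0 < l" "l < 1" "l *\<^sub>R z - T z \<in> K"
  shows "(\<lambda>k. (T ^^ k) x) \<longlonglongrightarrow> 0"
proof -
  obtain M where "0 \<le> M" "\<And>k x. norm ((T ^^ k) x) \<le> M * l ^ k * norm x"
    using geometric_power_bound[OF assms(1) less_imp_le[OF assms(2)] assms(4)] by blast
  with assms show ?thesis by (intro funpow_tendsto_zero_of_power_bound) auto
qed

end

theorem theorem3p11:
  fixes K :: "'a::banach set" and T :: "'a \<Rightarrow> 'a"
  assumes cone: "ordered_cone K"
    and normal: "normal_cone K"
    and int_ne: "interior K \<noteq> {}"
    and lin: "bounded_linear T"
    and pos: "T ` K \<subseteq> K"
  shows "(spectral_radius T < 1 \<longleftrightarrow>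
            (\<forall>f::'a \<Rightarrow> real. bounded_linear f \<and> (\<forall>x\<in>K. f x \<ge> 0) \<and> f \<noteq> (\<lambda>_. 0) \<longrightarrow>
                 \<not> (\<forall>x\<in>K. (f \<circ> T) x - f x \<ge> 0)))
       \<and> (spectral_radius T < 1 \<longleftrightarrow>
            (\<forall>z\<in>interior K. \<exists>\<eta>>0. \<forall>x\<in>K - {0}. T x - (x - (\<eta> * norm x) *\<^sub>R z) \<notin> K))
       \<and> (spectral_radius T < 1 \<longleftrightarrow>
            (\<exists>z\<in>interior K. \<exists>\<eta>>0. \<forall>x\<in>K - {0}. T x - (x - (\<eta> * norm x) *\<^sub>R z) \<notin> K))
       \<and> (spectral_radius T < 1 \<longleftrightarrow> (\<exists>z\<in>interior K. z - T z \<in> interior K))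
       \<and> (spectral_radius T < 1 \<longleftrightarrow>
            (\<exists>z\<in>interior K. \<exists>l. 0 < l \<and> l < 1 \<and> l *\<^sub>R z - T z \<in> K))
       \<and> (spectral_radius T < 1 \<longleftrightarrow> (\<forall>x. (\<lambda>k. (T ^^ k) x) \<longlonglongrightarrow> 0))
       \<and> (spectral_radius T < 1 \<longleftrightarrow> (\<forall>x\<in>K. (INF k. norm ((T ^^ k) x)) = 0))"
proof -
  interpret pos_operator K T
    by (intro pos_operator.intro normal_pos_cone.intro pos_cone.intro normal_pos_cone_axioms.intro
        pos_operator_axioms.intro cone normal lin pos int_ne)
  obtain z0 where z0: "z0 \<in> interior K" using solid by blast
  let ?iii = "\<forall>z\<in>interior K. \<exists>\<eta>>0. small_gain_margin z \<eta>"
  let ?iv = "\<exists>z\<in>interior K. \<exists>\<eta>>0. small_gain_margin z \<eta>"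
  let ?v = "\<exists>z\<in>interior K. z - T z \<in> interior K"
  let ?vi = "\<exists>z\<in>interior K. \<exists>l. 0 < l \<and> l < 1 \<and> l *\<^sub>R z - T z \<in> K"
  let ?vii = "\<forall>x. (\<lambda>k. (T ^^ k) x) \<longlonglongrightarrow> 0"
  have "spectral_radius T < 1 \<Longrightarrow> ?v"
    by (rule interior_subinvariant_of_pos_invertible_one, rule pos_invertible_one_of_spectral_radius)
  moreover have "?v \<Longrightarrow> ?vi"
    by (elim bexE) (use subeigen_of_interior_subinvariant in blast)
  moreover have "?vi \<Longrightarrow> spectral_radius T < 1"
    by (elim bexE exE conjE) (rule spectral_radius_less_one_of_subeigen)
  moreover have "?vi \<Longrightarrow> ?vii"
    by (elim bexE exE conjE) (rule allI, rule funpow_tendsto_zero_of_subeigen)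
  moreover have "?vii \<Longrightarrow> \<forall>x\<in>K. (INF k. norm ((T ^^ k) x)) = 0"
    by (intro ballI INF_norm_eq_zero_of_tendsto_zero) (rule spec)
  moreover note dual_small_gain_of_INF_norm interior_subinvariant_of_dual_small_gain
  moreover have "?vi \<Longrightarrow> ?iii"
    by (elim bexE exE conjE) (rule ballI, rule small_gain_margin_of_subeigen)
  moreover have "?iii \<Longrightarrow> ?iv"
    by (rule bexI[OF bspec[OF _ z0] z0])
  moreover have "?iv \<Longrightarrow> ?v"
    by (elim bexE exE conjE)
      (rule interior_subinvariant_of_pos_invertible_one, rule pos_invertible_one_of_small_gain)
  ultimately show ?thesis by argo
qed

end
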